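(* Let $\alpha>1$, $r=\frac12(1-\frac1\alpha)$, let $s\ge2$ be an integer, and define $\overline a=\frac{s-1}{2}$ if $s$ is odd and $\overline a=\frac s2$ if $s$ is even, $\overline b=s-\overline a$, and $n''_*=\lfloor-\log_r\overline a\rfloor+1$. Let $k$ be a positive even integer and $a_1,\dots,a_k$ positive integers with $a_{2i-1}+a_{2i}=s$ for $i=1,\dots,k/2$. If \[ k\ \ge\ \max\Bigg\{\left\lceil 2\,\frac{(1-r+r^{n''_*})^{\overline a-1}\,[\,\overline b(1-r+r^{n''_*})+\overline a\,]}{(1-r)^{\overline a-1}(1-r^{n''_*})^{\overline b-1}\,[\,\overline b(1-r)+\overline a(1-r^{n''_*})\,]}+2\right\rceil\cdot\Big(\frac{1-r}{r}\Big)^{\overline a},\ \ 2\Big(\frac{1-r}{r}\Big)^{\overline a+1},\ \ 2\Big(\frac1{1-r}\Big)^{s-1}+2\Bigg\}, \] then \[ \Big[0,\tfrac k2\Big]=\Big\{\sum_{i=1}^{k/2}x_{2i-1}^{a_{2i-1}}x_{2i}^{a_{2i}}:\ x_1,\dots,x_k\in C_\alpha\Big\}. \]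
   Context: For real $\alpha>1$ let $r=\frac12(1-\frac1\alpha)\in(0,\frac12)$. Define $f_0,f_1:[0,1]\to[0,1]$ by $f_0(x)=rx$, $f_1(x)=rx+1-r$; for $\omega=\sigma_1\cdots\sigma_n\in\{0,1\}^n$ let $f_\omega=f_{\sigma_1}\circ\cdots\circ f_{\sigma_n}$. Let $F_n=\{f_\omega([0,1]):\omega\in\{0,1\}^n\}$ (the level-$n$ basic intervals, each of length $r^n$), $C_n=\bigcup_{I\in F_n}I$, and $C_\alpha=\bigcap_{n\ge1}C_n$ (the middle-$\frac1\alpha$ Cantor set; $C_3$ is the ternary Cantor set). *)

theory Defs
  imports Complex_Main
begin

definition cratio :: "real \<Rightarrow> real" where
  "cratio \<alpha> = (1 - 1/\<alpha>) / 2"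

definition fdig :: "real \<Rightarrow> bool \<Rightarrow> real \<Rightarrow> real" where
  "fdig \<alpha> \<sigma> x = (if \<sigma> then cratio \<alpha> * x + 1 - cratio \<alpha> else cratio \<alpha> * x)"

definition fword :: "real \<Rightarrow> bool list \<Rightarrow> real \<Rightarrow> real" where
  "fword \<alpha> \<omega> = foldr (\<lambda>\<sigma> g. fdig \<alpha> \<sigma> \<circ> g) \<omega> id"

definition basic_intervals :: "real \<Rightarrow> nat \<Rightarrow> real set set" where
  "basic_intervals \<alpha> n = {fword \<alpha> \<omega> ` {0..1} | \<omega>. length \<omega> = n}"

definition Clevel :: "real \<Rightarrow> nat \<Rightarrow> real set" where
  "Clevel \<alpha> n = \<Union> (basic_intervals \<alpha> n)"

definition cantor :: "real \<Rightarrow> real set" where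
  "cantor \<alpha> = (\<Inter>n\<in>{1..}. Clevel \<alpha> n)"

definition abar :: "nat \<Rightarrow> nat" where
  "abar s = (if odd s then (s - 1) div 2 else s div 2)"

definition bbar :: "nat \<Rightarrow> nat" where
  "bbar s = s - abar s"

text \<open>n''_* = floor(-log_r abar) + 1 (it is >= 1 since abar >= 1 and 0 < r < 1)\<close>
definition nstar :: "real \<Rightarrow> nat \<Rightarrow> int" where
  "nstar \<alpha> s = \<lfloor>- log (cratio \<alpha>) (real (abar s))\<rfloor> + 1"

end

theory Submission
  imports Defs "HOL-Analysis.Analysis"
begin

(* Put the variable with the larger exponent of each pair equal to 1, which lies in the Cantor
   set C.  It then suffices that the sumset of the k/2 sets K_i = {x ^ c_i | x in C}, with
   c_i = min(a_(2i-1), a_(2i)) <= s div 2, is the interval [0, k/2].  Each K_i is a compact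
   subset of [0,1] containing 0 and 1, and its gaps are the images of the middle gaps
   (f_w(r), f_w(1-r)) of C; elementary estimates for (P + h t)^c show that K_i has Newhouse
   thickness at least an explicit tau depending only on alpha and s div 2.  A sum of m compact
   tau-thick subsets of [0,1] containing 0 and 1 is all of [0,m] once (m - 1) tau > 1: around
   any t one nests bridges of the K_i at the scales xi^n, xi = 1 / ((m - 1) tau), keeping t
   between the sums of their left and right ends, which produces points of the sumset
   converging to t.  The hypothesis on k gives (k/2 - 1) tau > 1. *)

section \<open>Sums of thick sets\<close>

definition gap :: "real set \<Rightarrow> real \<Rightarrow> real \<Rightarrow> bool" where
  "gap K x y \<longleftrightarrow> x \<in> K \<and> y \<in> K \<and> x < y \<and> (\<forall>z\<in>K. z \<le> x \<or> y \<le> z)"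

text \<open>Newhouse thickness at least \<open>\<tau>\<close> of a set \<open>K \<subseteq> [0,1]\<close>: the bridge of a gap, which
  reaches to the nearest gap that is at least as long or else to \<open>0\<close> or \<open>1\<close>, is at least
  \<open>\<tau>\<close> times as long as the gap.\<close>

definition thick :: "real set \<Rightarrow> real \<Rightarrow> bool" where
  "thick K \<tau> \<longleftrightarrow>
    (\<forall>x y. gap K x y \<longrightarrow> \<tau> * (y - x) \<le> x \<and> \<tau> * (y - x) \<le> 1 - y) \<and>
    (\<forall>x y x' y'. gap K x y \<longrightarrow> gap K x' y' \<longrightarrow> y' \<le> x \<longrightarrow> y - x \<le> y' - x' \<longrightarrow> \<tau> * (y - x) \<le> x - y') \<and>
    (\<forall>x y x' y'. gap K x y \<longrightarrow> gap K x' y' \<longrightarrow> y \<le> x' \<longrightarrow> y - x \<le> y' - x' \<longrightarrow> \<tau> * (y - x) \<le> x' - y)"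

definition bridge :: "real set \<Rightarrow> real \<Rightarrow> real \<Rightarrow> real \<Rightarrow> bool" where
  "bridge K \<delta> a b \<longleftrightarrow> a \<in> K \<and> b \<in> K \<and> a \<le> b \<and>
     (a = 0 \<or> (\<exists>x. gap K x a \<and> \<delta> \<le> a - x)) \<and>
     (b = 1 \<or> (\<exists>y. gap K b y \<and> \<delta> \<le> y - b)) \<and>
     (\<forall>x y. gap K x y \<longrightarrow> a \<le> x \<longrightarrow> y \<le> b \<longrightarrow> y - x < \<delta>)"

lemma thick_gap_le_ends:
  assumes "thick K \<tau>" "gap K x y"
  shows "\<tau> * (y - x) \<le> x" "\<tau> * (y - x) \<le> 1 - y"
  using assms by (simp_all add: thick_def)

lemma thick_gap_le_dist:
  assumes "thick K \<tau>" "gap K x y" "gap K x' y'" "y - x \<le> y' - x'"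
  shows "y' \<le> x \<Longrightarrow> \<tau> * (y - x) \<le> x - y'" "y \<le> x' \<Longrightarrow> \<tau> * (y - x) \<le> x' - y"
  using assms unfolding thick_def by blast+

lemma gap_reflect: "gap (uminus ` K) (- y) (- x) \<longleftrightarrow> gap K x y"
  unfolding gap_def by (force simp: image_iff)

lemma bridge_unit:
  assumes "K \<subseteq> {0..1}" "0 \<in> K" "1 \<in> K" "thick K \<tau>" "0 < \<tau>"
  shows "bridge K 1 0 1"
  unfolding bridge_def
proof (intro conjI allI impI)
  fix x y
  assume "gap K x y" "0 \<le> x" "y \<le> 1"
  moreover have "\<tau> * (y - x) \<le> x"
    using assms(4) \<open>gap K x y\<close> by (simp add: thick_def)
  moreover have "0 < \<tau> * (y - x)"
    using \<open>gap K x y\<close> assms(5) by (simp add: gap_def)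
  ultimately show "y - x < 1"
    by linarith
qed (use assms in auto)

lemma bridge_length_ge:
  assumes br: "bridge K \<delta> a b" and th: "thick K \<tau>"
    and "0 < \<tau>" "\<tau> \<le> 1" "0 < \<delta>" "\<delta> \<le> 1"
  shows "\<tau> * \<delta> \<le> b - a"
proof -
  have long_gap: "\<tau> * \<delta> \<le> \<tau> * d" if "\<delta> \<le> d" for d
    using that \<open>0 < \<tau>\<close> by simp
  have "a \<le> b"
    using br by (simp add: bridge_def)
  consider "a = 0" "b = 1"
    | y where "a = 0" "gap K b y" "\<delta> \<le> y - b"
    | x where "gap K x a" "\<delta> \<le> a - x" "b = 1"
    | x y where "gap K x a" "\<delta> \<le> a - x" "gap K b y" "\<delta> \<le> y - b"
    using br unfolding bridge_def by blast
  then show ?thesis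
  proof cases
    case 1
    have "\<tau> * \<delta> \<le> 1"
      using assms(3-6) by (intro mult_le_one) auto
    with 1 show ?thesis
      by simp
  next
    case (2 y)
    then show ?thesis
      using thick_gap_le_ends[OF th] long_gap[of "y - b"] by fastforce
  next
    case (3 x)
    then show ?thesis
      using thick_gap_le_ends[OF th] long_gap[of "a - x"] by fastforce
  next
    case (4 x y)
    then show ?thesis
      using thick_gap_le_dist[OF th, of b y x a] thick_gap_le_dist[OF th, of x a b y]
        long_gap[of "y - b"] long_gap[of "a - x"] \<open>a \<le> b\<close>
      by (cases "y - b \<le> a - x") auto
  qed
qed

lemma bridge_meets_window:
  assumes br: "bridge K \<delta> a b" and "closed K"
    and w: "w1 \<le> w2" "\<delta> \<le> w2 - w1" "w1 \<le> b" "a \<le> w2"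
  shows "\<exists>z\<in>K. a \<le> z \<and> z \<le> b \<and> w1 \<le> z \<and> z \<le> w2"
proof (rule ccontr)
  assume none: "\<not> ?thesis"
  have K: "a \<in> K" "b \<in> K" "a \<le> b"
    using br by (auto simp: bridge_def)
  with none w have "a < w1" "w2 < b"
    by force+
  obtain z1 where z1: "z1 \<in> K \<inter> {a..w1}" "\<forall>y\<in>K \<inter> {a..w1}. y \<le> z1"
    using compact_attains_sup[of "K \<inter> {a..w1}"] \<open>closed K\<close> K \<open>a < w1\<close>
    by (force simp: closed_Int_compact)
  obtain z2 where z2: "z2 \<in> K \<inter> {w2..b}" "\<forall>y\<in>K \<inter> {w2..b}. z2 \<le> y"
    using compact_attains_inf[of "K \<inter> {w2..b}"] \<open>closed K\<close> K \<open>w2 < b\<close>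
    by (force simp: closed_Int_compact)
  have "z1 \<noteq> z2"
    using none z1 z2 w by force
  have "gap K z1 z2"
    unfolding gap_def
  proof (intro conjI ballI)
    show "z1 \<in> K" "z2 \<in> K" "z1 < z2"
      using \<open>z1 \<noteq> z2\<close> z1 z2 w by auto
    fix z
    assume "z \<in> K"
    show "z \<le> z1 \<or> z2 \<le> z"
    proof (rule ccontr)
      assume between: "\<not> (z \<le> z1 \<or> z2 \<le> z)"
      then have "a \<le> z" "z \<le> b"
        using z1 z2 by auto
      moreover have "\<not> z \<le> w1" "\<not> w2 \<le> z"
        using z1(2) z2(2) \<open>z \<in> K\<close> between \<open>a \<le> z\<close> \<open>z \<le> b\<close> by auto
      ultimately show False
        using none \<open>z \<in> K\<close> by auto
    qed
  qed
  then have "z2 - z1 < \<delta>"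
    using br z1 z2 by (auto simp: bridge_def)
  with z1 z2 w show False
    by auto
qed

lemma separated_has_greatest:
  fixes E :: "real set"
  assumes "E \<noteq> {}" "bdd_above E" "0 < d" and sep: "\<And>x y. x \<in> E \<Longrightarrow> y \<in> E \<Longrightarrow> x < y \<Longrightarrow> x + d \<le> y"
  obtains e where "e \<in> E" "\<And>y. y \<in> E \<Longrightarrow> y \<le> e"
proof -
  obtain e where e: "e \<in> E" "Sup E - d < e"
    using less_cSup_iff[OF assms(1,2), of "Sup E - d"] \<open>0 < d\<close> by auto
  have "y \<le> e" if "y \<in> E" for y
    using sep[of e y] cSup_upper[OF that \<open>bdd_above E\<close>] e that by fastforce
  with e that show thesis
    by blast
qed

lemma last_long_gap_before:
  assumes "a \<in> K" "a \<le> z" "0 < d"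
  obtains a' where "a' \<in> K" "a \<le> a'" "a' \<le> z" "a' = a \<or> (\<exists>x. gap K x a' \<and> d \<le> a' - x)"
    "\<And>x y. gap K x y \<Longrightarrow> d \<le> y - x \<Longrightarrow> a \<le> y \<Longrightarrow> y \<le> z \<Longrightarrow> y \<le> a'"
proof -
  define E where "E = insert a {y. \<exists>x. gap K x y \<and> d \<le> y - x \<and> a \<le> y \<and> y \<le> z}"
  have E: "y \<in> K" "a \<le> y" "y \<le> z" if "y \<in> E" for y
    using that assms by (auto simp: E_def gap_def)
  have sep: "x + d \<le> y" if xy: "x \<in> E" "y \<in> E" "x < y" for x y
  proof -
    have "y \<noteq> a"
      using E(2)[OF xy(1)] xy(3) by auto
    then obtain x0 where "gap K x0 y" "d \<le> y - x0"
      using xy(2) by (auto simp: E_def)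
    moreover have "x \<le> x0"
      using xy E(1)[of x] \<open>gap K x0 y\<close> by (force simp: gap_def)
    ultimately show ?thesis
      by linarith
  qed
  moreover have "bdd_above E"
    using E(3) by (auto simp: bdd_above_def)
  moreover have "E \<noteq> {}"
    by (simp add: E_def)
  ultimately obtain a' where a': "a' \<in> E" "\<And>y. y \<in> E \<Longrightarrow> y \<le> a'"
    using separated_has_greatest \<open>0 < d\<close> by metis
  show thesis
  proof (rule that[of a'])
    show "a' = a \<or> (\<exists>x. gap K x a' \<and> d \<le> a' - x)"
      using a'(1) by (auto simp: E_def)
    show "y \<le> a'" if "gap K x y" "d \<le> y - x" "a \<le> y" "y \<le> z" for x y
      using that by (intro a'(2)) (auto simp: E_def)
  qed (use E a'(1) in auto)
qed

lemma first_long_gap_after: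
  assumes "b \<in> K" "z \<le> b" "0 < d"
  obtains b' where "b' \<in> K" "z \<le> b'" "b' \<le> b" "b' = b \<or> (\<exists>y. gap K b' y \<and> d \<le> y - b')"
    "\<And>x y. gap K x y \<Longrightarrow> d \<le> y - x \<Longrightarrow> z \<le> x \<Longrightarrow> x \<le> b \<Longrightarrow> b' \<le> x"
proof -
  obtain a' where a': "a' \<in> uminus ` K" "- b \<le> a'" "a' \<le> - z"
    "a' = - b \<or> (\<exists>x. gap (uminus ` K) x a' \<and> d \<le> a' - x)"
    "\<And>x y. gap (uminus ` K) x y \<Longrightarrow> d \<le> y - x \<Longrightarrow> - b \<le> y \<Longrightarrow> y \<le> - z \<Longrightarrow> y \<le> a'"
    by (rule last_long_gap_before[of "- b" "uminus ` K" "- z" d]) (use assms in auto)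
  show thesis
  proof (rule that[of "- a'"])
    show "- a' = b \<or> (\<exists>y. gap K (- a') y \<and> d \<le> y - - a')"
    proof (cases "a' = - b")
      case False
      then obtain x where "gap (uminus ` K) x a'" "d \<le> a' - x"
        using a'(4) by blast
      then show ?thesis
        using gap_reflect[of K "- x" "- a'"] by auto
    qed simp
    show "- a' \<le> x" if "gap K x y" "d \<le> y - x" "z \<le> x" "x \<le> b" for x y
      using a'(5)[of "- y" "- x"] that gap_reflect[of K y x] by auto
  qed (use a' in auto)
qed

lemma bridge_refine:
  assumes br: "bridge K \<delta> a b" and z: "z \<in> K" "a \<le> z" "z \<le> b" and d: "0 < \<delta>'" "\<delta>' \<le> \<delta>"
  obtains a' b' where "bridge K \<delta>' a' b'" "a \<le> a'" "a' \<le> z" "z \<le> b'" "b' \<le> b"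
proof -
  have K: "a \<in> K" "b \<in> K"
    using br by (auto simp: bridge_def)
  obtain a' where a': "a' \<in> K" "a \<le> a'" "a' \<le> z" "a' = a \<or> (\<exists>x. gap K x a' \<and> \<delta>' \<le> a' - x)"
    "\<And>x y. gap K x y \<Longrightarrow> \<delta>' \<le> y - x \<Longrightarrow> a \<le> y \<Longrightarrow> y \<le> z \<Longrightarrow> y \<le> a'"
    using last_long_gap_before[OF K(1) z(2) d(1)] by blast
  obtain b' where b': "b' \<in> K" "z \<le> b'" "b' \<le> b" "b' = b \<or> (\<exists>y. gap K b' y \<and> \<delta>' \<le> y - b')"
    "\<And>x y. gap K x y \<Longrightarrow> \<delta>' \<le> y - x \<Longrightarrow> z \<le> x \<Longrightarrow> x \<le> b \<Longrightarrow> b' \<le> x"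
    using first_long_gap_after[OF K(2) z(3) d(1)] by blast
  have "y - x < \<delta>'" if "gap K x y" "a' \<le> x" "y \<le> b'" for x y
  proof (rule ccontr)
    assume "\<not> y - x < \<delta>'"
    moreover have "z \<le> x \<or> y \<le> z" "x < y"
      using \<open>gap K x y\<close> z(1) by (auto simp: gap_def)
    ultimately show False
      using a'(2) a'(5)[OF that(1)] b'(3) b'(5)[OF that(1)] that(2,3) by force
  qed
  moreover have "a' = 0 \<or> (\<exists>x. gap K x a' \<and> \<delta>' \<le> a' - x)" "b' = 1 \<or> (\<exists>y. gap K b' y \<and> \<delta>' \<le> y - b')"
    using a'(4) b'(4) br d(2) unfolding bridge_def by force+
  ultimately have "bridge K \<delta>' a' b'"
    using a'(1,3) b'(1,2) by (auto simp: bridge_def)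
  with a' b' that show thesis
    by blast
qed

lemma sum_fun_upd_remove:
  assumes "finite I" "l \<in> I"
  shows "sum (f(l := v)) I = v + sum f (I - {l})"
proof -
  have "sum (f(l := v)) (I - {l}) = sum f (I - {l})"
    by (rule sum.cong) auto
  then show ?thesis
    using sum.remove[OF assms, of "f(l := v)"] by simp
qed

lemma sum_bridge_lengths_ge:
  assumes "finite J" "\<And>i. i \<in> J \<Longrightarrow> thick (K i) \<tau>" "0 < \<tau>" "\<tau> \<le> 1"
    and "\<And>i. i \<in> J \<Longrightarrow> bridge (K i) (d i) (a i) (b i)" "\<And>i. i \<in> J \<Longrightarrow> \<delta> \<le> d i \<and> d i \<le> 1" "0 < \<delta>"
  shows "real (card J) * (\<tau> * \<delta>) \<le> sum b J - sum a J"
proof -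
  have "\<tau> * \<delta> \<le> b i - a i" if "i \<in> J" for i
  proof -
    have "\<tau> * \<delta> \<le> \<tau> * d i"
      using assms(3,6) that by simp
    also have "\<dots> \<le> b i - a i"
      using bridge_length_ge[OF assms(5)[OF that] assms(2)[OF that] assms(3,4)] assms(6,7) that by force
    finally show ?thesis .
  qed
  then have "(\<Sum>i\<in>J. \<tau> * \<delta>) \<le> (\<Sum>i\<in>J. b i - a i)"
    by (intro sum_mono) auto
  then show ?thesis
    by (simp add: sum_subtractf)
qed

lemma bridges_refine_one:
  assumes I: "finite I" "l \<in> I"
    and K: "\<And>i. i \<in> I \<Longrightarrow> closed (K i)" "\<And>i. i \<in> I \<Longrightarrow> thick (K i) \<tau>"
    and \<tau>: "0 < \<tau>" "\<tau> \<le> 1"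
    and \<delta>: "0 < \<delta>'" "\<delta>' \<le> \<delta>" "\<delta> \<le> 1" "\<delta> \<le> (real (card I) - 1) * \<tau> * \<delta>'"
    and d: "\<And>i. i \<in> I \<Longrightarrow> \<delta>' \<le> d i \<and> d i \<le> \<delta>"
    and br: "\<And>i. i \<in> I \<Longrightarrow> bridge (K i) (d i) (a i) (b i)"
    and t: "sum a I \<le> t" "t \<le> sum b I"
  obtains a' b' where "\<And>i. i \<in> I \<Longrightarrow> bridge (K i) ((d(l := \<delta>')) i) (a' i) (b' i)"
    "sum a' I \<le> t" "t \<le> sum b' I"
proof -
  define y1 where "y1 = sum a (I - {l})"
  define y2 where "y2 = sum b (I - {l})"
  have "real (card (I - {l})) * (\<tau> * \<delta>') \<le> y2 - y1"
  proof (unfold y1_def y2_def, rule sum_bridge_lengths_ge[where K = K and d = d, OF _ _ \<tau>])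
    show "\<delta>' \<le> d i \<and> d i \<le> 1" if "i \<in> I - {l}" for i
      using d[of i] \<delta>(3) that by auto
  qed (use I K(2) br \<delta> in auto)
  moreover have "real (card (I - {l})) = real (card I) - 1"
  proof -
    have "0 < card I"
      using I by (auto simp: card_gt_0_iff)
    then show ?thesis
      using I by (simp add: card_Diff_singleton)
  qed
  ultimately have "\<delta> \<le> (t - y1) - (t - y2)"
    using \<delta>(4) by (simp add: mult.assoc)
  moreover have "sum a I = a l + y1" "sum b I = b l + y2"
    using sum.remove[OF I] by (simp_all add: y1_def y2_def)
  ultimately obtain z where z: "z \<in> K l" "a l \<le> z" "z \<le> b l" "t - y2 \<le> z" "z \<le> t - y1"
    using bridge_meets_window[OF br[OF I(2)] K(1)[OF I(2)], of "t - y2" "t - y1"] d[OF I(2)] \<delta> t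
    by auto
  obtain a'' b'' where ab'': "bridge (K l) \<delta>' a'' b''" "a'' \<le> z" "z \<le> b''"
    using bridge_refine[OF br[OF I(2)] z(1-3), of \<delta>'] d[OF I(2)] \<delta>(1) by blast
  show thesis
  proof (rule that[of "a(l := a'')" "b(l := b'')"])
    show "bridge (K i) ((d(l := \<delta>')) i) ((a(l := a'')) i) ((b(l := b'')) i)" if "i \<in> I" for i
      using br[OF that] ab''(1) by (cases "i = l") simp_all
    show "sum (a(l := a'')) I \<le> t" "t \<le> sum (b(l := b'')) I"
      using sum_fun_upd_remove[OF I, of a a''] sum_fun_upd_remove[OF I, of b b''] z ab''
      unfolding y1_def y2_def by linarith+
  qed
qed

lemma bridges_refine:
  assumes I: "finite I"
    and K: "\<And>i. i \<in> I \<Longrightarrow> closed (K i)" "\<And>i. i \<in> I \<Longrightarrow> thick (K i) \<tau>"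
    and \<tau>: "0 < \<tau>" "\<tau> \<le> 1"
    and \<delta>: "0 < \<delta>'" "\<delta>' \<le> \<delta>" "\<delta> \<le> 1" "\<delta> \<le> (real (card I) - 1) * \<tau> * \<delta>'"
    and br: "\<And>i. i \<in> I \<Longrightarrow> bridge (K i) \<delta> (a i) (b i)"
    and t: "sum a I \<le> t" "t \<le> sum b I"
  obtains a' b' where "\<And>i. i \<in> I \<Longrightarrow> bridge (K i) \<delta>' (a' i) (b' i)" "sum a' I \<le> t" "t \<le> sum b' I"
proof -
  have "\<exists>a' b'. (\<forall>i\<in>I. bridge (K i) (if i \<in> J then \<delta>' else \<delta>) (a' i) (b' i))
      \<and> sum a' I \<le> t \<and> t \<le> sum b' I" if "J \<subseteq> I" for J
    using finite_subset[OF that I] that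
  proof (induction J rule: finite_subset_induct)
    case empty
    then show ?case
      using br t by auto
  next
    case (insert l J)
    define d where "d i = (if i \<in> J then \<delta>' else \<delta>)" for i
    obtain a' b' where old: "\<forall>i\<in>I. bridge (K i) (d i) (a' i) (b' i)" "sum a' I \<le> t" "t \<le> sum b' I"
      using insert.IH unfolding d_def by blast
    have d: "\<And>i. i \<in> I \<Longrightarrow> \<delta>' \<le> d i \<and> d i \<le> \<delta>"
      using \<delta>(2) by (simp add: d_def)
    obtain a'' b'' where new: "\<And>i. i \<in> I \<Longrightarrow> bridge (K i) ((d(l := \<delta>')) i) (a'' i) (b'' i)"
      "sum a'' I \<le> t" "t \<le> sum b'' I"
      by (rule bridges_refine_one[where K = K and d = d and l = l and a = a' and b = b'])
        (use I insert.hyps(2) K \<tau> \<delta> d old in auto)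
    have "d(l := \<delta>') = (\<lambda>i. if i \<in> insert l J then \<delta>' else \<delta>)"
      by (auto simp: d_def)
    with new show ?case
      by (intro exI[of _ a''] exI[of _ b'']) simp
  qed
  then show thesis
    using that by fastforce
qed

lemma compact_sumset:
  fixes K :: "'a \<Rightarrow> real set"
  assumes "finite I" "\<And>i. i \<in> I \<Longrightarrow> compact (K i)"
  shows "compact {sum z I | z. \<forall>i\<in>I. z i \<in> K i}"
  using assms
proof (induction I rule: finite_induct)
  case empty
  have "{sum z {} | z. \<forall>i\<in>{}. z i \<in> K i} = {0 :: real}"
    by auto
  then show ?case
    by simp
next
  case (insert j I)
  have split: "{sum z (insert j I) | z. \<forall>i\<in>insert j I. z i \<in> K i}
      = {x + y | x y. x \<in> K j \<and> y \<in> {sum z I | z. \<forall>i\<in>I. z i \<in> K i}}"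
  proof (intro set_eqI iffI)
    fix s
    assume "s \<in> {sum z (insert j I) | z. \<forall>i\<in>insert j I. z i \<in> K i}"
    then obtain z where "s = z j + sum z I" "\<forall>i\<in>insert j I. z i \<in> K i"
      using insert.hyps by auto
    then show "s \<in> {x + y | x y. x \<in> K j \<and> y \<in> {sum z I | z. \<forall>i\<in>I. z i \<in> K i}}"
      by blast
  next
    fix s
    assume "s \<in> {x + y | x y. x \<in> K j \<and> y \<in> {sum z I | z. \<forall>i\<in>I. z i \<in> K i}}"
    then obtain x z where xz: "s = x + sum z I" "x \<in> K j" "\<forall>i\<in>I. z i \<in> K i"
      by blast
    then have "s = sum (z(j := x)) (insert j I)" "\<forall>i\<in>insert j I. (z(j := x)) i \<in> K i"
      using insert.hyps by (auto intro!: sum.cong)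
    then show "s \<in> {sum z (insert j I) | z. \<forall>i\<in>insert j I. z i \<in> K i}"
      by blast
  qed
  have "compact (K j)" "compact {sum z I | z. \<forall>i\<in>I. z i \<in> K i}"
    using insert.prems by (auto intro: insert.IH)
  then show ?case
    unfolding split by (rule compact_sums)
qed

lemma thick_bridges_all_scales:
  assumes I: "finite I"
    and K: "\<And>i. i \<in> I \<Longrightarrow> closed (K i)" "\<And>i. i \<in> I \<Longrightarrow> K i \<subseteq> {0..1}"
      "\<And>i. i \<in> I \<Longrightarrow> 0 \<in> K i" "\<And>i. i \<in> I \<Longrightarrow> 1 \<in> K i" "\<And>i. i \<in> I \<Longrightarrow> thick (K i) \<tau>"
    and \<tau>: "0 < \<tau>" "\<tau> \<le> 1" and \<xi>: "0 < \<xi>" "\<xi> \<le> 1" "(real (card I) - 1) * \<tau> * \<xi> = 1"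
    and t: "0 \<le> t" "t \<le> real (card I)"
  shows "\<exists>a b. (\<forall>i\<in>I. bridge (K i) (\<xi> ^ n) (a i) (b i)) \<and> sum a I \<le> t \<and> t \<le> sum b I"
proof (induction n)
  case 0
  have "\<forall>i\<in>I. bridge (K i) 1 0 1"
    using bridge_unit[OF K(2-5) \<tau>(1)] by blast
  with t show ?case
    by (intro exI[of _ "\<lambda>_. 0"] exI[of _ "\<lambda>_. 1"]) simp
next
  case (Suc n)
  then obtain a b where ab: "\<forall>i\<in>I. bridge (K i) (\<xi> ^ n) (a i) (b i)" "sum a I \<le> t" "t \<le> sum b I"
    by blast
  have scale: "\<xi> ^ n \<le> (real (card I) - 1) * \<tau> * \<xi> ^ Suc n"
  proof -
    have "(real (card I) - 1) * \<tau> * \<xi> ^ Suc n = ((real (card I) - 1) * \<tau> * \<xi>) * \<xi> ^ n"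
      by (simp add: algebra_simps)
    also have "\<dots> = \<xi> ^ n"
      using \<xi>(3) by simp
    finally show ?thesis
      by linarith
  qed
  have "0 < \<xi> ^ Suc n" "\<xi> ^ Suc n \<le> \<xi> ^ n" "\<xi> ^ n \<le> 1"
    using \<xi> by (simp_all add: power_le_one mult_left_le_one_le)
  then obtain a' b' where "\<And>i. i \<in> I \<Longrightarrow> bridge (K i) (\<xi> ^ Suc n) (a' i) (b' i)"
    "sum a' I \<le> t" "t \<le> sum b' I"
    using bridges_refine[where K = K and a = a and b = b and t = t] I K(1,5) \<tau> ab scale by metis
  then show ?case
    by blast
qed

lemma bridges_approximate_sum:
  assumes I: "finite I" and K: "\<And>i. i \<in> I \<Longrightarrow> closed (K i)"
    and br: "\<forall>i\<in>I. bridge (K i) \<delta> (a i) (b i)" and "0 < \<delta>"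
    and t: "sum a I \<le> t" "t \<le> sum b I"
  obtains z where "\<forall>i\<in>I. z i \<in> K i" "\<bar>sum z I - t\<bar> \<le> real (card I) * \<delta>"
proof -
  define \<mu> where "\<mu> = (if sum b I = sum a I then 0 else (t - sum a I) / (sum b I - sum a I))"
  have \<mu>: "0 \<le> \<mu>" "\<mu> \<le> 1" "sum a I + \<mu> * (sum b I - sum a I) = t"
    using t by (auto simp: \<mu>_def field_simps)
  define y where "y i = a i + \<mu> * (b i - a i)" for i
  have "sum y I = t"
    using \<mu>(3) by (simp add: y_def sum.distrib sum_subtractf flip: sum_distrib_left)
  have "\<exists>w\<in>K i. y i - \<delta> \<le> w \<and> w \<le> y i" if "i \<in> I" for i
  proof -
    have "a i \<le> b i"
      using br that by (simp add: bridge_def)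
    then have "a i \<le> y i" "y i \<le> b i"
      using \<mu> mult_left_le_one_le[of "b i - a i" \<mu>] by (simp_all add: y_def)
    then show ?thesis
      using bridge_meets_window[of "K i" \<delta> "a i" "b i" "y i - \<delta>" "y i"] br K that \<open>0 < \<delta>\<close> by auto
  qed
  then obtain z where z: "\<forall>i\<in>I. z i \<in> K i \<and> y i - \<delta> \<le> z i \<and> z i \<le> y i"
    by metis
  have "0 \<le> (\<Sum>i\<in>I. y i - z i)"
    using z by (intro sum_nonneg) auto
  moreover have "(\<Sum>i\<in>I. y i - z i) \<le> (\<Sum>i\<in>I. \<delta>)"
    using z by (intro sum_mono) auto
  ultimately have "\<bar>sum z I - t\<bar> \<le> real (card I) * \<delta>"
    using \<open>sum y I = t\<close> by (simp add: sum_subtractf)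
  with z that show thesis
    by blast
qed

theorem thick_sumset_contains_interval:
  assumes I: "finite I"
    and K: "\<And>i. i \<in> I \<Longrightarrow> compact (K i)" "\<And>i. i \<in> I \<Longrightarrow> K i \<subseteq> {0..1}"
      "\<And>i. i \<in> I \<Longrightarrow> 0 \<in> K i" "\<And>i. i \<in> I \<Longrightarrow> 1 \<in> K i" "\<And>i. i \<in> I \<Longrightarrow> thick (K i) \<tau>"
    and \<tau>: "0 < \<tau>" "\<tau> \<le> 1" "1 < (real (card I) - 1) * \<tau>"
  shows "{0..real (card I)} \<subseteq> {sum z I | z. \<forall>i\<in>I. z i \<in> K i}"
proof
  fix t
  assume t: "t \<in> {0..real (card I)}"
  define S where "S = {sum z I | z. \<forall>i\<in>I. z i \<in> K i}"
  define \<xi> where "\<xi> = 1 / ((real (card I) - 1) * \<tau>)"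
  have \<xi>: "0 < \<xi>" "\<xi> < 1" "(real (card I) - 1) * \<tau> * \<xi> = 1"
    using \<tau> by (auto simp: \<xi>_def)
  have closed_K: "\<And>i. i \<in> I \<Longrightarrow> closed (K i)"
    using K(1) compact_imp_closed by blast
  have "card I > 0"
    using \<tau> by (cases "card I") auto
  have "\<exists>s\<in>S. dist s t < e" if "0 < e" for e
  proof -
    obtain n where n: "\<xi> ^ n < e / real (card I)"
      using real_arch_pow_inv[of "e / real (card I)" \<xi>] \<xi> \<open>0 < e\<close> \<open>card I > 0\<close> by auto
    have "0 \<le> t" "t \<le> real (card I)" "\<xi> \<le> 1"
      using t \<xi> by auto
    then obtain a b where "\<forall>i\<in>I. bridge (K i) (\<xi> ^ n) (a i) (b i)" "sum a I \<le> t" "t \<le> sum b I"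
      using thick_bridges_all_scales[where K = K and n = n, OF I closed_K K(2-5) \<tau>(1,2) \<xi>(1) _ \<xi>(3)] by blast
    then obtain z where "\<forall>i\<in>I. z i \<in> K i" "\<bar>sum z I - t\<bar> \<le> real (card I) * \<xi> ^ n"
      using bridges_approximate_sum[where K = K, OF I closed_K] \<xi>(1) by (metis zero_less_power)
    moreover have "real (card I) * \<xi> ^ n < e"
      using n \<open>card I > 0\<close> by (simp add: field_simps)
    ultimately show ?thesis
      unfolding S_def dist_real_def by fastforce
  qed
  moreover have "closed S"
    unfolding S_def using compact_sumset[OF I K(1)] by (rule compact_imp_closed)
  ultimately show "t \<in> S"
    using closed_approachable by blast
qed

section \<open>Estimates for powers\<close>

text \<open>In the following, \<open>[P, P + h]\<close> is a basic interval of the Cantor set, \<open>(P + h r, P + h (1 - r))\<close>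
  its middle gap, and the \<open>c\<close>-th powers of these points are compared.\<close>

lemma power_diff_bounds:
  fixes x y :: real
  assumes "0 \<le> x" "x \<le> y"
  shows "(y - x) * (real c * x^(c-1)) \<le> y^c - x^c"
    and "y^c - x^c \<le> (y - x) * (real c * y^(c-1))"
proof -
  have eq: "y^c - x^c = (y - x) * (\<Sum>i<c. x^(c - Suc i) * y^i)"
    by (rule power_diff_sumr2)
  have "x^(c-1) \<le> x^(c - Suc i) * y^i" "x^(c - Suc i) * y^i \<le> y^(c-1)" if "i < c" for i
  proof -
    have "x^(c - Suc i) * x^i \<le> x^(c - Suc i) * y^i" "x^(c - Suc i) * y^i \<le> y^(c - Suc i) * y^i"
      using assms by (auto intro: mult_left_mono mult_right_mono power_mono)
    moreover have "x^(c - Suc i) * x^i = x^(c-1)" "y^(c - Suc i) * y^i = y^(c-1)"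
      using that by (simp_all flip: power_add)
    ultimately show "x^(c-1) \<le> x^(c - Suc i) * y^i" "x^(c - Suc i) * y^i \<le> y^(c-1)"
      by simp_all
  qed
  then have "real c * x^(c-1) \<le> (\<Sum>i<c. x^(c - Suc i) * y^i)"
    "(\<Sum>i<c. x^(c - Suc i) * y^i) \<le> real c * y^(c-1)"
    using sum_mono[of "{..<c}" "\<lambda>i. x^(c-1)" "\<lambda>i. x^(c - Suc i) * y^i"]
      sum_mono[of "{..<c}" "\<lambda>i. x^(c - Suc i) * y^i" "\<lambda>i. y^(c-1)"] by simp_all
  moreover have "0 \<le> y - x"
    using assms by simp
  ultimately show "(y - x) * (real c * x^(c-1)) \<le> y^c - x^c"
    and "y^c - x^c \<le> (y - x) * (real c * y^(c-1))"
    unfolding eq by (simp_all add: mult_left_mono)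
qed

text \<open>Compare the binomial expansions of both sides term by term.\<close>

lemma power_increment_scale_le:
  fixes p u k :: real
  assumes "0 \<le> p" "0 \<le> u" "1 \<le> k"
  shows "(p + k*u)^c - p^c \<le> k^c * ((p + u)^c - p^c)"
proof -
  define g where "g j = real (c choose j) * (k^j - k^c) * u^j * p^(c-j)" for j
  have "(k*u + p)^c = (\<Sum>j\<le>c. real (c choose j) * (k*u)^j * p^(c-j))"
    "(u + p)^c = (\<Sum>j\<le>c. real (c choose j) * u^j * p^(c-j))"
    by (rule binomial_ring)+
  then have "(p + k*u)^c - k^c * (p + u)^c = (\<Sum>j\<le>c. g j)"
    unfolding g_def by (simp add: sum_distrib_left sum_subtractf[symmetric] algebra_simps)
  also have "\<dots> = g 0 + (\<Sum>j\<in>{..c} - {0}. g j)"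
    by (simp add: sum.remove)
  also have "\<dots> \<le> g 0"
  proof -
    have "g j \<le> 0" if "j \<in> {..c} - {0}" for j
    proof -
      have "k^j \<le> k^c"
        using that assms by (intro power_increasing) auto
      moreover have "0 \<le> real (c choose j) * u^j * p^(c-j)"
        using assms by simp
      ultimately have "k^j * (real (c choose j) * u^j * p^(c-j)) \<le> k^c * (real (c choose j) * u^j * p^(c-j))"
        by (rule mult_right_mono)
      then show ?thesis
        unfolding g_def by (simp add: algebra_simps)
    qed
    then have "sum g ({..c} - {0}) \<le> 0"
      by (intro sum_nonpos) blast
    then show ?thesis
      by simp
  qed
  also have "g 0 = (1 - k^c) * p^c"
    by (simp add: g_def)
  finally show ?thesis
    by (simp add: algebra_simps)
qed

lemma gap_power_le:
  fixes r P h :: real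
  assumes "0 \<le> P" "0 \<le> h" "0 \<le> r" "r \<le> 1/2"
  shows "(P + h*(1-r))^c - (P + h*r)^c \<le> h * (1 - 2*r) * (real c * (P + h*(1-r))^(c-1))"
proof -
  have "P + h*r \<le> P + h*(1-r)"
    using assms by (simp add: mult_left_mono)
  then show ?thesis
    using power_diff_bounds(2)[of "P + h*r" "P + h*(1-r)" c] assms by (simp add: algebra_simps)
qed

lemma gap_power_le_left_piece:
  fixes r P h \<tau> :: real
  assumes r: "0 < r" "r < 1/2" and "0 \<le> P" "0 < h" "0 \<le> \<tau>"
    and \<tau>: "\<tau> * (((1-r)/r)^c - 1) \<le> 1"
  shows "\<tau> * ((P + h*(1-r))^c - (P + h*r)^c) \<le> (P + h*r)^c - P^c"
proof -
  define k where "k = (1-r)/r"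
  define L where "L = (P + h*r)^c - P^c"
  have "1 \<le> k" and kk: "P + k*(h*r) = P + h*(1-r)"
    using r by (simp_all add: k_def field_simps)
  then have "(P + h*(1-r))^c - P^c \<le> k^c * L"
    using power_increment_scale_le[of P "h*r" k c] assms unfolding L_def kk[symmetric] by simp
  then have "\<tau> * ((P + h*(1-r))^c - (P + h*r)^c) \<le> (\<tau> * (k^c - 1)) * L"
    using \<open>0 \<le> \<tau>\<close> mult_left_mono by (fastforce simp: L_def algebra_simps)
  also have "\<dots> \<le> L"
    using \<tau> assms power_mono[of P "P + h*r" c] mult_right_mono[of "\<tau> * (k^c - 1)" 1 L]
    by (simp add: k_def L_def)
  finally show ?thesis
    by (simp add: L_def)
qed

lemma gap_power_le_right_piece:
  fixes r P h \<tau> :: real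
  assumes "0 < r" "r < 1/2" "0 \<le> P" "0 < h" "0 \<le> \<tau>"
    and \<tau>: "\<tau> * (1 - 2*r) \<le> r"
  shows "\<tau> * ((P + h*(1-r))^c - (P + h*r)^c) \<le> (P + h)^c - (P + h*(1-r))^c"
proof -
  define X where "X = real c * (P + h*(1-r))^(c-1)"
  have "0 \<le> X"
    using assms by (simp add: X_def)
  have "\<tau> * ((P + h*(1-r))^c - (P + h*r)^c) \<le> \<tau> * (h * (1 - 2*r) * X)"
    using gap_power_le[of P h r c] assms by (simp add: X_def mult_left_mono)
  also have "\<dots> = (\<tau> * (1 - 2*r)) * (h * X)"
    by (simp add: algebra_simps)
  also have "\<dots> \<le> (h * r) * X"
    using \<tau> assms \<open>0 \<le> X\<close> mult_right_mono[of "\<tau> * (1 - 2*r)" r "h * X"] by (simp add: algebra_simps)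
  also have "\<dots> \<le> (P + h)^c - (P + h*(1-r))^c"
  proof -
    have "h * r \<le> h" "0 \<le> h * r"
      using assms by (auto intro: mult_left_le)
    then have "0 \<le> P + h*(1-r)" "P + h*(1-r) \<le> P + h"
      unfolding right_diff_distrib mult_1_right using assms by linarith+
    from power_diff_bounds(1)[OF this, of c] show ?thesis
      by (simp add: X_def algebra_simps)
  qed
  finally show ?thesis .
qed

lemma gap_power_le_dist_right_gap:
  fixes r P h \<tau> P2 h2 :: real
  assumes r: "0 < r" "r < 1/2" and "0 \<le> P" "0 < h" "0 \<le> \<tau>"
    and \<tau>: "\<tau> * (1 - 2*r) \<le> r * (1-r)^(c-1)"
    and P2: "P + h*(1-r) \<le> P2" "0 < h2" "P2 + h2*(1-r) \<le> P + h"
    and longer: "(P + h*(1-r))^c - (P + h*r)^c \<le> (P2 + h2*(1-r))^c - (P2 + h2*r)^c"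
  shows "\<tau> * ((P + h*(1-r))^c - (P + h*r)^c) \<le> (P2 + h2*r)^c - (P + h*(1-r))^c"
proof -
  define b where "b = P + h*(1-r)"
  have "h * r \<le> h"
    using assms by (intro mult_left_le) auto
  then have "h * r \<le> P + h"
    using assms by linarith
  moreover have "0 \<le> P * r"
    using assms by simp
  ultimately have "0 \<le> b" "(1-r) * (P + h) \<le> b"
    by (simp_all add: b_def algebra_simps)
  have "0 \<le> P2 + h2*(1-r)"
    using \<open>0 \<le> b\<close> P2 r by (simp add: b_def add_increasing2)
  then have "(P2 + h2*(1-r))^(c-1) \<le> (P + h)^(c-1)"
    by (rule power_mono[OF P2(3)])
  then have "h2 * (1 - 2*r) * (real c * (P2 + h2*(1-r))^(c-1)) \<le> h2 * (1 - 2*r) * (real c * (P + h)^(c-1))"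
    using P2 r by (intro mult_left_mono) auto
  moreover have "(P2 + h2*(1-r))^c - (P2 + h2*r)^c \<le> h2 * (1 - 2*r) * (real c * (P2 + h2*(1-r))^(c-1))"
    using \<open>0 \<le> b\<close> P2 r by (intro gap_power_le) (auto simp: b_def)
  ultimately have "\<tau> * ((P + h*(1-r))^c - (P + h*r)^c) \<le> \<tau> * (h2 * (1 - 2*r) * (real c * (P + h)^(c-1)))"
    using longer \<open>0 \<le> \<tau>\<close> by (intro mult_left_mono) auto
  also have "\<dots> = (\<tau> * (1 - 2*r)) * (h2 * real c * (P + h)^(c-1))"
    by (simp add: algebra_simps)
  also have "\<dots> \<le> (r * (1-r)^(c-1)) * (h2 * real c * (P + h)^(c-1))"
    using \<tau> P2 assms by (intro mult_right_mono) auto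
  also have "\<dots> = h2 * r * (real c * ((1-r) * (P + h))^(c-1))"
    by (simp add: power_mult_distrib)
  also have "\<dots> \<le> h2 * r * (real c * b^(c-1))"
    using \<open>(1-r) * (P + h) \<le> b\<close> assms P2 by (intro mult_left_mono power_mono) auto
  also have "\<dots> \<le> ((P2 + h2*r) - b) * (real c * b^(c-1))"
    using P2(1) \<open>0 \<le> b\<close> by (intro mult_right_mono) (auto simp: b_def)
  also have "\<dots> \<le> (P2 + h2*r)^c - b^c"
  proof -
    have "b \<le> P2 + h2*r"
      using P2 r mult_pos_pos[of h2 r] unfolding b_def by linarith
    then show ?thesis
      using power_diff_bounds(1)[OF \<open>0 \<le> b\<close>] by simp
  qed
  finally show ?thesis
    by (simp add: b_def)
qed

lemma gap_power_left_child_less: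
  fixes r P h P2 h2 :: real
  assumes r: "0 < r" "r < 1/2" and "0 \<le> P" "0 < h" "1 \<le> c"
    and P2: "P \<le> P2" "0 < h2" "h2 \<le> r * h" "P2 + h2*(1-r) \<le> P + h*r"
  shows "(P2 + h2*(1-r))^c - (P2 + h2*r)^c < (P + h*(1-r))^c - (P + h*r)^c"
proof -
  define a where "a = P + h*r"
  define X where "X = real c * a^(c-1)"
  have "0 < a"
    using assms by (simp add: a_def add_nonneg_pos)
  then have "0 < X"
    using \<open>1 \<le> c\<close> by (simp add: X_def)
  have "0 \<le> P2 + h2*(1-r)"
    using assms by simp
  then have "(P2 + h2*(1-r))^(c-1) \<le> a^(c-1)"
    using P2(4) by (simp add: a_def power_mono)
  then have "h2 * (1 - 2*r) * (real c * (P2 + h2*(1-r))^(c-1)) \<le> h2 * (1 - 2*r) * X"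
    using P2 r by (auto simp: X_def intro!: mult_left_mono)
  moreover have "(P2 + h2*(1-r))^c - (P2 + h2*r)^c \<le> h2 * (1 - 2*r) * (real c * (P2 + h2*(1-r))^(c-1))"
    using assms by (intro gap_power_le) auto
  ultimately have "(P2 + h2*(1-r))^c - (P2 + h2*r)^c \<le> h2 * (1 - 2*r) * X"
    by linarith
  also have "\<dots> \<le> (r * h) * (1 - 2*r) * X"
    using P2 r \<open>0 < X\<close> by (intro mult_right_mono) auto
  also have "\<dots> < h * (1 - 2*r) * X"
    using r assms \<open>0 < X\<close> by simp
  also have "\<dots> \<le> (P + h*(1-r))^c - (P + h*r)^c"
    using power_diff_bounds(1)[of a "P + h*(1-r)" c] \<open>0 < a\<close> assms mult_left_mono[of r "1-r" h]
    by (simp add: X_def a_def algebra_simps)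
  finally show ?thesis .
qed

section \<open>The middle-\<open>1/\<alpha>\<close> Cantor set\<close>

lemma fword_Nil [simp]: "fword \<alpha> [] = id"
  by (simp add: fword_def)

lemma fword_Cons [simp]: "fword \<alpha> (b # w) = fdig \<alpha> b \<circ> fword \<alpha> w"
  by (simp add: fword_def)

lemma fword_append: "fword \<alpha> (u @ v) = fword \<alpha> u \<circ> fword \<alpha> v"
  by (induction u) auto

lemma fword_affine: "fword \<alpha> w x = fword \<alpha> w 0 + cratio \<alpha> ^ length w * x"
  by (induction w) (auto simp: fdig_def algebra_simps)

definition basic_interval :: "real \<Rightarrow> bool list \<Rightarrow> real set" where
  "basic_interval \<alpha> w = {fword \<alpha> w 0 .. fword \<alpha> w 0 + cratio \<alpha> ^ length w}"

lemma basic_interval_Nil [simp]: "basic_interval \<alpha> [] = {0..1}"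
  by (simp add: basic_interval_def)

context
  fixes \<alpha> :: real
  assumes \<alpha>: "\<alpha> > 1"
begin

lemma cratio_bounds: "0 < cratio \<alpha>" "cratio \<alpha> < 1/2"
  using \<alpha> by (simp_all add: cratio_def field_simps)

lemma fword_image_unit: "fword \<alpha> w ` {0..1} = basic_interval \<alpha> w"
proof -
  define p where "p = fword \<alpha> w 0"
  have affine: "fword \<alpha> w = (\<lambda>x. cratio \<alpha> ^ length w * x + p)"
    unfolding p_def by (rule ext, subst fword_affine) simp
  show ?thesis
    unfolding affine image_affinity_atLeastAtMost basic_interval_def p_def[symmetric]
    using cratio_bounds(1) by (simp add: add.commute)
qed

lemma fdig_unit:
  assumes "x \<in> {0..1}"
  shows "fdig \<alpha> b x \<in> {0..1}"
proof -
  have "0 \<le> cratio \<alpha> * x" "cratio \<alpha> * x \<le> cratio \<alpha>"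
    using assms cratio_bounds(1) mult_left_le[of x "cratio \<alpha>"] by auto
  then show ?thesis
    using cratio_bounds(2) by (auto simp: fdig_def)
qed

lemma fword_unit: "x \<in> {0..1} \<Longrightarrow> fword \<alpha> w x \<in> {0..1}"
  by (induction w arbitrary: x) (auto intro: fdig_unit simp del: atLeastAtMost_iff)

lemma basic_interval_subset_unit: "basic_interval \<alpha> w \<subseteq> {0..1}"
  using fword_unit by (auto simp flip: fword_image_unit simp del: atLeastAtMost_iff)

lemma basic_interval_append_subset: "basic_interval \<alpha> (u @ v) \<subseteq> basic_interval \<alpha> u"
proof -
  have "fword \<alpha> (u @ v) ` {0..1} = fword \<alpha> u ` (fword \<alpha> v ` {0..1})"
    by (simp add: fword_append image_comp)
  also have "\<dots> \<subseteq> fword \<alpha> u ` {0..1}"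
    using fword_unit by (auto simp del: atLeastAtMost_iff)
  finally show ?thesis
    by (simp add: fword_image_unit)
qed

lemma basic_interval_take: "x \<in> basic_interval \<alpha> w \<Longrightarrow> x \<in> basic_interval \<alpha> (take n w)"
  using basic_interval_append_subset[of "take n w" "drop n w"] by auto

lemma mem_Clevel_iff: "x \<in> Clevel \<alpha> n \<longleftrightarrow> (\<exists>w. length w = n \<and> x \<in> basic_interval \<alpha> w)"
  by (auto simp: Clevel_def basic_intervals_def fword_image_unit)

lemma cantor_mem_level:
  assumes "x \<in> cantor \<alpha>"
  obtains w where "length w = n" "x \<in> basic_interval \<alpha> w"
proof -
  obtain w where "length w = Suc n" "x \<in> basic_interval \<alpha> w"
    using assms by (auto simp: cantor_def mem_Clevel_iff)
  then show thesis
    using that[of "take n w"] basic_interval_take by auto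
qed

lemma mem_cantor_iff: "x \<in> cantor \<alpha> \<longleftrightarrow> (\<forall>n. \<exists>w. n \<le> length w \<and> x \<in> basic_interval \<alpha> w)"
proof
  show "x \<in> cantor \<alpha> \<Longrightarrow> \<forall>n. \<exists>w. n \<le> length w \<and> x \<in> basic_interval \<alpha> w"
    by (metis cantor_mem_level order_refl)
next
  assume "\<forall>n. \<exists>w. n \<le> length w \<and> x \<in> basic_interval \<alpha> w"
  then have "x \<in> Clevel \<alpha> n" for n
    by (metis basic_interval_take length_take min_absorb2 mem_Clevel_iff)
  then show "x \<in> cantor \<alpha>"
    by (simp add: cantor_def)
qed

lemma cantor_subset_unit: "cantor \<alpha> \<subseteq> {0..1}"
  by (metis basic_interval_Nil cantor_mem_level length_0_conv subsetI)

lemma fword_mem_cantor: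
  assumes "y \<in> cantor \<alpha>"
  shows "fword \<alpha> w y \<in> cantor \<alpha>"
  unfolding mem_cantor_iff
proof
  fix n
  obtain v where v: "length v = n" "y \<in> basic_interval \<alpha> v"
    using assms by (rule cantor_mem_level)
  then have "fword \<alpha> w y \<in> fword \<alpha> w ` fword \<alpha> v ` {0..1}"
    by (simp add: fword_image_unit)
  then have "fword \<alpha> w y \<in> basic_interval \<alpha> (w @ v)"
    by (simp add: fword_append image_comp flip: fword_image_unit)
  with v show "\<exists>u. n \<le> length u \<and> fword \<alpha> w y \<in> basic_interval \<alpha> u"
    by (intro exI[of _ "w @ v"]) simp
qed

lemma zero_mem_cantor: "0 \<in> cantor \<alpha>"
  unfolding mem_cantor_iff
proof
  fix n
  have "fword \<alpha> (replicate n False) 0 = 0"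
    by (induction n) (auto simp: fdig_def)
  then have "0 \<in> basic_interval \<alpha> (replicate n False)"
    using cratio_bounds(1) by (simp add: basic_interval_def)
  then show "\<exists>w. n \<le> length w \<and> 0 \<in> basic_interval \<alpha> w"
    by (metis length_replicate order_refl)
qed

lemma one_mem_cantor: "1 \<in> cantor \<alpha>"
  unfolding mem_cantor_iff
proof
  fix n
  have "fword \<alpha> (replicate n True) 1 = 1"
    by (induction n) (auto simp: fdig_def)
  then have "1 \<in> basic_interval \<alpha> (replicate n True)"
    by (metis atLeastAtMost_iff fword_image_unit image_eqI order_refl zero_le_one)
  then show "\<exists>w. n \<le> length w \<and> 1 \<in> basic_interval \<alpha> w"
    by (metis length_replicate order_refl)
qed

lemma compact_cantor: "compact (cantor \<alpha>)"
proof -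
  have "closed (Clevel \<alpha> n)" for n
  proof -
    have "Clevel \<alpha> n = \<Union> (basic_interval \<alpha> ` {w. length w = n})"
      using mem_Clevel_iff by blast
    moreover have "finite {w :: bool list. length w = n}"
      using finite_lists_length_eq[of "UNIV :: bool set" n] by simp
    ultimately show ?thesis
      by (auto simp: basic_interval_def)
  qed
  then have "closed (cantor \<alpha>)"
    by (simp add: cantor_def closed_INT)
  then show ?thesis
    using cantor_subset_unit by (metis bounded_cbox bounded_subset box_real(2) compact_eq_bounded_closed)
qed

lemma cratio_mem_cantor: "cratio \<alpha> \<in> cantor \<alpha>" "1 - cratio \<alpha> \<in> cantor \<alpha>"
  using fword_mem_cantor[OF one_mem_cantor, of "[False]"] fword_mem_cantor[OF zero_mem_cantor, of "[True]"]
  by (simp_all add: fdig_def)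

lemma fword_strict_mono: "x < y \<Longrightarrow> fword \<alpha> w x < fword \<alpha> w y"
  using cratio_bounds(1) by (subst (1 2) fword_affine) simp

lemma basic_interval_snoc:
  "basic_interval \<alpha> (w @ [False]) = {fword \<alpha> w 0 .. fword \<alpha> w (cratio \<alpha>)}"
  "basic_interval \<alpha> (w @ [True]) = {fword \<alpha> w (1 - cratio \<alpha>) .. fword \<alpha> w 1}"
  using fword_affine[of \<alpha> w "cratio \<alpha>"] fword_affine[of \<alpha> w "1 - cratio \<alpha>"] fword_affine[of \<alpha> w 1]
  by (simp_all add: basic_interval_def fword_append fdig_def algebra_simps)

lemma basic_interval_snoc_affine:
  "basic_interval \<alpha> (w @ [False]) = {fword \<alpha> w 0 .. fword \<alpha> w 0 + cratio \<alpha> ^ length w * cratio \<alpha>}"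
  "basic_interval \<alpha> (w @ [True]) =
     {fword \<alpha> w 0 + cratio \<alpha> ^ length w * (1 - cratio \<alpha>) .. fword \<alpha> w 0 + cratio \<alpha> ^ length w}"
  using basic_interval_snoc[of w] fword_affine[of \<alpha> w "cratio \<alpha>"]
    fword_affine[of \<alpha> w "1 - cratio \<alpha>"] fword_affine[of \<alpha> w 1]
  by simp_all

lemma basic_interval_disjoint:
  assumes "length u = length v" "u \<noteq> v"
  shows "basic_interval \<alpha> u \<inter> basic_interval \<alpha> v = {}"
  using assms
proof (induction u arbitrary: v)
  case Nil
  then show ?case by simp
next
  case (Cons b u)
  then obtain c v' where v: "v = c # v'"
    by (cases v) auto
  show ?case
  proof (cases "b = c")
    case True
    have inj: "inj (fdig \<alpha> b)"
      using cratio_bounds(1) by (auto simp: inj_def fdig_def)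
    have image: "basic_interval \<alpha> (d # w) = fdig \<alpha> d ` basic_interval \<alpha> w" for d w
      by (metis fword_Cons fword_image_unit image_comp)
    have "basic_interval \<alpha> (b # u) \<inter> basic_interval \<alpha> v
        = fdig \<alpha> b ` (basic_interval \<alpha> u \<inter> basic_interval \<alpha> v')"
      by (simp add: v True image image_Int[OF inj[unfolded True]])
    also have "\<dots> = {}"
      using Cons.IH[of v'] Cons.prems v True by simp
    finally show ?thesis .
  next
    case False
    have sub: "basic_interval \<alpha> (b # u) \<subseteq> basic_interval \<alpha> [b]"
      "basic_interval \<alpha> v \<subseteq> basic_interval \<alpha> [c]"
      using basic_interval_append_subset[of "[b]" u] basic_interval_append_subset[of "[c]" v']
      by (simp_all add: v)
    have "basic_interval \<alpha> [False] = {0 .. cratio \<alpha>}" "basic_interval \<alpha> [True] = {1 - cratio \<alpha> .. 1}"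
      using basic_interval_snoc[of "[]"] by simp_all
    then have "basic_interval \<alpha> [b] \<inter> basic_interval \<alpha> [c] = {}"
      using False cratio_bounds(2) by (cases b; cases c) auto
    with sub show ?thesis
      by blast
  qed
qed

lemma cantor_mem_child:
  assumes "x \<in> cantor \<alpha>" "x \<in> basic_interval \<alpha> w"
  obtains b where "x \<in> basic_interval \<alpha> (w @ [b])"
proof -
  obtain v where v: "length v = Suc (length w)" "x \<in> basic_interval \<alpha> v"
    using assms(1) by (rule cantor_mem_level)
  then obtain u b where u: "v = u @ [b]"
    by (metis Zero_neq_Suc length_0_conv rev_exhaust)
  then have "x \<in> basic_interval \<alpha> u"
    using v(2) basic_interval_append_subset by blast
  then have "u = w"
    using basic_interval_disjoint[of u w] v u assms(2) by force
  then show thesis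
    using that u v by blast
qed

lemma cantor_pair_children:
  assumes "a < b" "a \<in> cantor \<alpha>" "b \<in> cantor \<alpha>"
    and "a \<in> basic_interval \<alpha> w" "b \<in> basic_interval \<alpha> w"
  obtains c where "a \<in> basic_interval \<alpha> (w @ [c])" "b \<in> basic_interval \<alpha> (w @ [c])"
    | "a \<in> basic_interval \<alpha> (w @ [False])" "b \<in> basic_interval \<alpha> (w @ [True])"
proof -
  obtain c d where c: "a \<in> basic_interval \<alpha> (w @ [c])" and d: "b \<in> basic_interval \<alpha> (w @ [d])"
    using cantor_mem_child assms by metis
  have "\<not> (c \<and> \<not> d)"
  proof
    assume "c \<and> \<not> d"
    then have "fword \<alpha> w (1 - cratio \<alpha>) \<le> a" "b \<le> fword \<alpha> w (cratio \<alpha>)"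
      using c d by (auto simp: basic_interval_snoc)
    moreover have "fword \<alpha> w (cratio \<alpha>) < fword \<alpha> w (1 - cratio \<alpha>)"
      using cratio_bounds(2) by (intro fword_strict_mono) simp
    ultimately show False
      using \<open>a < b\<close> by linarith
  qed
  then show thesis
    using that c d by (cases c; cases d) auto
qed

lemma cantor_pair_separating_word:
  assumes ab: "a < b" "a \<in> cantor \<alpha>" "b \<in> cantor \<alpha>"
    and u: "a \<in> basic_interval \<alpha> u" "b \<in> basic_interval \<alpha> u"
  obtains v where "a \<in> basic_interval \<alpha> (u @ v @ [False])" "b \<in> basic_interval \<alpha> (u @ v @ [True])"
proof -
  define P where "P n \<longleftrightarrow> (\<exists>v. length v = n \<and> a \<in> basic_interval \<alpha> (u @ v) \<and> b \<in> basic_interval \<alpha> (u @ v))"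
    for n
  obtain N where N: "cratio \<alpha> ^ N < b - a"
    using real_arch_pow_inv[of "b - a" "cratio \<alpha>"] ab cratio_bounds(2) by auto
  have bounded: "n < N" if "P n" for n
  proof -
    obtain v where "length v = n" "a \<in> basic_interval \<alpha> (u @ v)" "b \<in> basic_interval \<alpha> (u @ v)"
      using \<open>P n\<close> by (auto simp: P_def)
    then have "cratio \<alpha> ^ N < cratio \<alpha> ^ (length u + n)"
      using N by (auto simp: basic_interval_def)
    then show ?thesis
      using cratio_bounds by simp
  qed
  have "P 0"
    unfolding P_def using u by (intro exI[of _ "[]"]) simp
  then have "\<exists>n. P n \<and> (\<forall>n'. P n' \<longrightarrow> n' \<le> n)"
    by (rule ex_has_greatest_nat) (use bounded in blast)
  then obtain n where "P n" and n_max: "\<forall>n'. P n' \<longrightarrow> n' \<le> n"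
    by blast
  then obtain v where v: "length v = n" "a \<in> basic_interval \<alpha> (u @ v)" "b \<in> basic_interval \<alpha> (u @ v)"
    by (auto simp: P_def)
  show thesis
  proof (rule cantor_pair_children[OF ab v(2,3)])
    fix c
    assume "a \<in> basic_interval \<alpha> ((u @ v) @ [c])" "b \<in> basic_interval \<alpha> ((u @ v) @ [c])"
    then have "P (Suc n)"
      unfolding P_def using v(1) by (intro exI[of _ "v @ [c]"]) simp
    then show thesis
      using n_max by force
  qed (use that in auto)
qed

lemma cantor_gap_word:
  assumes "gap (cantor \<alpha>) a b" "a \<in> basic_interval \<alpha> u" "b \<in> basic_interval \<alpha> u"
  obtains v where "a = fword \<alpha> (u @ v) (cratio \<alpha>)" "b = fword \<alpha> (u @ v) (1 - cratio \<alpha>)"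
proof -
  have ab: "a < b" "a \<in> cantor \<alpha>" "b \<in> cantor \<alpha>" and empty_between: "\<forall>z\<in>cantor \<alpha>. z \<le> a \<or> b \<le> z"
    using assms(1) by (auto simp: gap_def)
  obtain v where "a \<in> basic_interval \<alpha> (u @ v @ [False])" "b \<in> basic_interval \<alpha> (u @ v @ [True])"
    using cantor_pair_separating_word[OF ab assms(2,3)] by blast
  then have le: "a \<le> fword \<alpha> (u @ v) (cratio \<alpha>)" "fword \<alpha> (u @ v) (1 - cratio \<alpha>) \<le> b"
    using basic_interval_snoc[of "u @ v"] by auto
  have lt: "fword \<alpha> (u @ v) (cratio \<alpha>) < fword \<alpha> (u @ v) (1 - cratio \<alpha>)"
    using cratio_bounds(2) by (intro fword_strict_mono) simp
  have "fword \<alpha> (u @ v) (cratio \<alpha>) \<le> a \<or> b \<le> fword \<alpha> (u @ v) (cratio \<alpha>)"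
    "fword \<alpha> (u @ v) (1 - cratio \<alpha>) \<le> a \<or> b \<le> fword \<alpha> (u @ v) (1 - cratio \<alpha>)"
    using empty_between cratio_mem_cantor fword_mem_cantor by blast+
  then have "a = fword \<alpha> (u @ v) (cratio \<alpha>)" "b = fword \<alpha> (u @ v) (1 - cratio \<alpha>)"
    using le lt by linarith+
  then show thesis
    by (rule that)
qed

lemma cantor_gap_affine:
  assumes "gap (cantor \<alpha>) a b" "a \<in> basic_interval \<alpha> u" "b \<in> basic_interval \<alpha> u"
  obtains w where "a = fword \<alpha> w 0 + cratio \<alpha> ^ length w * cratio \<alpha>"
    "b = fword \<alpha> w 0 + cratio \<alpha> ^ length w * (1 - cratio \<alpha>)"
    "basic_interval \<alpha> w \<subseteq> basic_interval \<alpha> u" "length u \<le> length w"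
proof -
  obtain v where "a = fword \<alpha> (u @ v) (cratio \<alpha>)" "b = fword \<alpha> (u @ v) (1 - cratio \<alpha>)"
    using cantor_gap_word[OF assms] by blast
  then show thesis
    using that[of "u @ v"] basic_interval_append_subset[of u v]
    by (metis fword_affine le_add1 length_append)
qed

lemma basic_interval_ends:
  "0 \<le> fword \<alpha> w 0" "fword \<alpha> w 0 + cratio \<alpha> ^ length w \<le> 1"
  "fword \<alpha> w 0 \<in> cantor \<alpha>" "fword \<alpha> w 0 + cratio \<alpha> ^ length w \<in> cantor \<alpha>"
proof -
  show "0 \<le> fword \<alpha> w 0" "fword \<alpha> w 0 + cratio \<alpha> ^ length w \<le> 1"
    using basic_interval_subset_unit[of w] cratio_bounds(1) by (auto simp: basic_interval_def)
  show "fword \<alpha> w 0 \<in> cantor \<alpha>" "fword \<alpha> w 0 + cratio \<alpha> ^ length w \<in> cantor \<alpha>"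
    using fword_mem_cantor[OF zero_mem_cantor, of w] fword_mem_cantor[OF one_mem_cantor, of w]
      fword_affine[of \<alpha> w 1] by simp_all
qed

end

section \<open>Powers of the Cantor set\<close>

lemma gap_power_image:
  fixes S :: "real set"
  assumes "1 \<le> c" "S \<subseteq> {0..}" "gap ((\<lambda>x. x ^ c) ` S) x y"
  obtains a b where "x = a ^ c" "y = b ^ c" "gap S a b"
proof -
  obtain a b where ab: "a \<in> S" "b \<in> S" "x = a ^ c" "y = b ^ c"
    using assms(3) by (auto simp: gap_def)
  have "u ^ c \<le> v ^ c \<longleftrightarrow> u \<le> v" if "u \<in> S" "v \<in> S" for u v
    using that assms(1,2) by (intro power_mono_iff) auto
  then have "gap S a b"
    using assms(3) ab unfolding gap_def by (auto simp: not_le[symmetric])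
  with ab that show thesis
    by blast
qed

context
  fixes \<alpha> :: real
  assumes \<alpha>: "\<alpha> > 1"
begin

lemma cantor_gap_inside:
  assumes "gap (cantor \<alpha>) a b" "a \<in> basic_interval \<alpha> u" "b \<in> basic_interval \<alpha> u"
  obtains P h where "a = P + h * cratio \<alpha>" "b = P + h * (1 - cratio \<alpha>)"
    "P \<in> basic_interval \<alpha> u" "0 < h" "h \<le> cratio \<alpha> ^ length u"
proof -
  obtain w where w: "a = fword \<alpha> w 0 + cratio \<alpha> ^ length w * cratio \<alpha>"
    "b = fword \<alpha> w 0 + cratio \<alpha> ^ length w * (1 - cratio \<alpha>)"
    "basic_interval \<alpha> w \<subseteq> basic_interval \<alpha> u" "length u \<le> length w"
    using cantor_gap_affine[OF \<alpha> assms] by blast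
  have "fword \<alpha> w 0 \<in> basic_interval \<alpha> w"
    using cratio_bounds(1)[OF \<alpha>] by (simp add: basic_interval_def)
  moreover have "cratio \<alpha> ^ length w \<le> cratio \<alpha> ^ length u"
    using w(4) cratio_bounds[OF \<alpha>] by (intro power_decreasing) auto
  ultimately show thesis
  proof (intro that)
    show "0 < cratio \<alpha> ^ length w"
      using cratio_bounds(1)[OF \<alpha>] by simp
  qed (use w in blast)+
qed

lemma cantor_nonneg: "cantor \<alpha> \<subseteq> {0..}"
  using cantor_subset_unit[OF \<alpha>] by auto

lemma power_cantor_gap:
  assumes "1 \<le> c" "gap ((\<lambda>x. x ^ c) ` cantor \<alpha>) x y"
  obtains P h w where "x = (P + h * cratio \<alpha>) ^ c" "y = (P + h * (1 - cratio \<alpha>)) ^ c"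
    "0 \<le> P" "0 < h" "P + h \<le> 1" "P \<in> cantor \<alpha>" "P + h \<in> cantor \<alpha>" "h = cratio \<alpha> ^ length w"
    "basic_interval \<alpha> (w @ [False]) = {P .. P + h * cratio \<alpha>}"
    "basic_interval \<alpha> (w @ [True]) = {P + h * (1 - cratio \<alpha>) .. P + h}"
proof -
  obtain a b where ab: "x = a ^ c" "y = b ^ c" "gap (cantor \<alpha>) a b"
    using gap_power_image[OF assms(1) cantor_nonneg assms(2)] by blast
  then have "a \<in> basic_interval \<alpha> []" "b \<in> basic_interval \<alpha> []"
    using cantor_subset_unit[OF \<alpha>] by (auto simp: gap_def)
  then obtain w where "a = fword \<alpha> w 0 + cratio \<alpha> ^ length w * cratio \<alpha>"
    "b = fword \<alpha> w 0 + cratio \<alpha> ^ length w * (1 - cratio \<alpha>)"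
    using cantor_gap_affine[OF \<alpha> ab(3)] by blast
  with ab show thesis
    using that[of "fword \<alpha> w 0" "cratio \<alpha> ^ length w" w] basic_interval_ends[OF \<alpha>, of w]
      basic_interval_snoc_affine[OF \<alpha>, of w] cratio_bounds(1)[OF \<alpha>]
    by (simp add: mult.commute)
qed

end

context
  fixes \<alpha> \<tau> :: real and c :: nat
  assumes \<alpha>: "\<alpha> > 1" and c: "1 \<le> c" and \<tau>: "0 \<le> \<tau>"
    and \<tau>_ratio: "\<tau> * (((1 - cratio \<alpha>) / cratio \<alpha>) ^ c - 1) \<le> 1"
    and \<tau>_middle: "\<tau> * (1 - 2 * cratio \<alpha>) \<le> cratio \<alpha> * (1 - cratio \<alpha>) ^ (c - 1)"
begin

lemma \<tau>_middle_le: "\<tau> * (1 - 2 * cratio \<alpha>) \<le> cratio \<alpha>"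
proof -
  have "(1 - cratio \<alpha>) ^ (c - 1) \<le> 1"
    using cratio_bounds[OF \<alpha>] by (intro power_le_one) auto
  then have "cratio \<alpha> * (1 - cratio \<alpha>) ^ (c - 1) \<le> cratio \<alpha>"
    using cratio_bounds[OF \<alpha>] mult_left_mono[of _ 1 "cratio \<alpha>"] by simp
  with \<tau>_middle show ?thesis
    by linarith
qed

lemma power_cantor_gap_le_ends:
  assumes "gap ((\<lambda>x. x ^ c) ` cantor \<alpha>) x y"
  shows "\<tau> * (y - x) \<le> x" "\<tau> * (y - x) \<le> 1 - y"
proof -
  let ?r = "cratio \<alpha>"
  obtain P h where Ph: "x = (P + h * ?r) ^ c" "y = (P + h * (1 - ?r)) ^ c" "0 \<le> P" "0 < h" "P + h \<le> 1"
    using power_cantor_gap[OF \<alpha> c assms] by metis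
  have "\<tau> * (y - x) \<le> (P + h * ?r)^c - P^c" "0 \<le> P^c"
    using gap_power_le_left_piece[OF cratio_bounds[OF \<alpha>] Ph(3,4) \<tau> \<tau>_ratio] Ph by simp_all
  then show "\<tau> * (y - x) \<le> x"
    using Ph(1) by simp
  have "\<tau> * (y - x) \<le> (P + h)^c - (P + h * (1 - ?r))^c" "(P + h)^c \<le> 1"
    using gap_power_le_right_piece[OF cratio_bounds[OF \<alpha>] Ph(3,4) \<tau> \<tau>_middle_le] Ph
    by (simp_all add: power_le_one)
  then show "\<tau> * (y - x) \<le> 1 - y"
    using Ph(2) by simp
qed

lemma power_cantor_gap_le_dist_left:
  assumes g: "gap ((\<lambda>x. x ^ c) ` cantor \<alpha>) x y" and g': "gap ((\<lambda>x. x ^ c) ` cantor \<alpha>) x' y'"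
    and "y' \<le> x" "y - x \<le> y' - x'"
  shows "\<tau> * (y - x) \<le> x - y'"
proof -
  let ?r = "cratio \<alpha>"
  obtain P h w where Ph: "x = (P + h * ?r) ^ c" "y = (P + h * (1 - ?r)) ^ c" "0 \<le> P" "0 < h"
    "P \<in> cantor \<alpha>" "h = ?r ^ length w" "basic_interval \<alpha> (w @ [False]) = {P .. P + h * ?r}"
    using power_cantor_gap[OF \<alpha> c g] by metis
  obtain a' b' where ab': "x' = a' ^ c" "y' = b' ^ c" "gap (cantor \<alpha>) a' b'"
    using gap_power_image[OF c cantor_nonneg[OF \<alpha>] g'] by blast
  have "0 \<le> b'" "0 \<le> P + h * ?r"
    using ab'(3) cantor_nonneg[OF \<alpha>] Ph(3,4) cratio_bounds[OF \<alpha>] by (auto simp: gap_def)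
  then have "b' \<le> P + h * ?r"
    using \<open>y' \<le> x\<close> Ph(1) ab'(2) c by simp
  have "b' \<le> P"
  proof (rule ccontr)
    assume "\<not> b' \<le> P"
    then have "a' \<in> basic_interval \<alpha> (w @ [False])" "b' \<in> basic_interval \<alpha> (w @ [False])"
      using ab'(3) Ph(5,7) \<open>b' \<le> P + h * ?r\<close> by (auto simp: gap_def)
    then obtain P2 h2 where P2: "a' = P2 + h2 * ?r" "b' = P2 + h2 * (1 - ?r)"
      "P2 \<in> basic_interval \<alpha> (w @ [False])" "0 < h2" "h2 \<le> ?r ^ length (w @ [False])"
      using cantor_gap_inside[OF \<alpha> ab'(3)] by blast
    have "(P2 + h2*(1-?r))^c - (P2 + h2*?r)^c < (P + h*(1-?r))^c - (P + h*?r)^c"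
      using P2 Ph \<open>b' \<le> P + h * ?r\<close>
      by (intro gap_power_left_child_less[OF cratio_bounds[OF \<alpha>] Ph(3,4) c]) (auto simp: mult.commute)
    then show False
      using \<open>y - x \<le> y' - x'\<close> Ph ab' P2 by simp
  qed
  have "\<tau> * (y - x) \<le> (P + h * ?r)^c - P^c"
    using gap_power_le_left_piece[OF cratio_bounds[OF \<alpha>] Ph(3,4) \<tau> \<tau>_ratio] Ph by simp
  moreover have "b'^c \<le> P^c"
    using \<open>b' \<le> P\<close> \<open>0 \<le> b'\<close> by (simp add: power_mono)
  ultimately show ?thesis
    using Ph(1) ab'(2) by simp
qed

lemma power_cantor_gap_le_dist_right:
  assumes g: "gap ((\<lambda>x. x ^ c) ` cantor \<alpha>) x y" and g': "gap ((\<lambda>x. x ^ c) ` cantor \<alpha>) x' y'"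
    and "y \<le> x'" "y - x \<le> y' - x'"
  shows "\<tau> * (y - x) \<le> x' - y"
proof -
  let ?r = "cratio \<alpha>"
  obtain P h w where Ph: "x = (P + h * ?r) ^ c" "y = (P + h * (1 - ?r)) ^ c" "0 \<le> P" "0 < h"
    "P + h \<in> cantor \<alpha>" "basic_interval \<alpha> (w @ [True]) = {P + h * (1 - ?r) .. P + h}"
    using power_cantor_gap[OF \<alpha> c g] by metis
  obtain a' b' where ab': "x' = a' ^ c" "y' = b' ^ c" "gap (cantor \<alpha>) a' b'"
    using gap_power_image[OF c cantor_nonneg[OF \<alpha>] g'] by blast
  have "0 \<le> a'" "0 \<le> P + h * (1 - ?r)"
    using ab'(3) cantor_nonneg[OF \<alpha>] Ph(3,4) cratio_bounds[OF \<alpha>] by (auto simp: gap_def)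
  then have "P + h * (1 - ?r) \<le> a'"
    using \<open>y \<le> x'\<close> Ph(2) ab'(1) c by simp
  show ?thesis
  proof (cases "P + h \<le> a'")
    case True
    have "\<tau> * (y - x) \<le> (P + h)^c - (P + h * (1 - ?r))^c"
      using gap_power_le_right_piece[OF cratio_bounds[OF \<alpha>] Ph(3,4) \<tau> \<tau>_middle_le] Ph by simp
    moreover have "(P + h)^c \<le> a'^c"
      using True Ph by (intro power_mono) auto
    ultimately show ?thesis
      using Ph(2) ab'(1) by simp
  next
    case False
    then have "a' \<in> basic_interval \<alpha> (w @ [True])" "b' \<in> basic_interval \<alpha> (w @ [True])"
      using ab'(3) Ph(5,6) \<open>P + h * (1 - ?r) \<le> a'\<close> by (auto simp: gap_def)
    then obtain P2 h2 where P2: "a' = P2 + h2 * ?r" "b' = P2 + h2 * (1 - ?r)"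
      "P2 \<in> basic_interval \<alpha> (w @ [True])" "0 < h2"
      using cantor_gap_inside[OF \<alpha> ab'(3)] by blast
    have "\<tau> * ((P + h*(1-?r))^c - (P + h*?r)^c) \<le> (P2 + h2*?r)^c - (P + h*(1-?r))^c"
      using P2 Ph \<open>b' \<in> basic_interval \<alpha> (w @ [True])\<close> \<open>y - x \<le> y' - x'\<close> ab'
      by (intro gap_power_le_dist_right_gap[OF cratio_bounds[OF \<alpha>] Ph(3,4) \<tau> \<tau>_middle]) auto
    then show ?thesis
      using Ph ab' P2 by simp
  qed
qed

lemma thick_power_cantor: "thick ((\<lambda>x. x ^ c) ` cantor \<alpha>) \<tau>"
  unfolding thick_def
  using power_cantor_gap_le_ends power_cantor_gap_le_dist_left power_cantor_gap_le_dist_right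
  by blast

end

text \<open>The largest \<open>\<tau> \<le> 1\<close> satisfying \<open>\<tau>_ratio\<close> and \<open>\<tau>_middle\<close> above for every exponent
  \<open>c \<le> A\<close>.\<close>

definition cantor_power_thickness :: "real \<Rightarrow> nat \<Rightarrow> real" where
  "cantor_power_thickness \<alpha> A = (let r = cratio \<alpha> in
     min 1 (min (1 / (((1 - r) / r) ^ A - 1)) (r * (1 - r) ^ (A - 1) / (1 - 2 * r))))"

lemma cantor_power_thickness:
  assumes "\<alpha> > 1" "1 \<le> c" "c \<le> A"
  shows "0 < cantor_power_thickness \<alpha> A" "cantor_power_thickness \<alpha> A \<le> 1"
    and "thick ((\<lambda>x. x ^ c) ` cantor \<alpha>) (cantor_power_thickness \<alpha> A)"
proof -
  define r where "r = cratio \<alpha>"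
  define q where "q = (1 - r) / r"
  define \<tau> where "\<tau> = cantor_power_thickness \<alpha> A"
  have r: "0 < r" "r < 1/2"
    using cratio_bounds[OF assms(1)] by (auto simp: r_def)
  then have "1 < q"
    by (simp add: q_def field_simps)
  then have "1 \<le> q ^ c" "q ^ c \<le> q ^ A" "1 < q ^ A"
    using assms(2,3) by (auto intro: one_le_power power_increasing one_less_power)
  have \<tau>: "\<tau> = min 1 (min (1 / (q ^ A - 1)) (r * (1 - r) ^ (A - 1) / (1 - 2 * r)))"
    by (simp add: \<tau>_def cantor_power_thickness_def Let_def r_def q_def)
  show "0 < cantor_power_thickness \<alpha> A" "cantor_power_thickness \<alpha> A \<le> 1"
    using r \<open>1 < q ^ A\<close> by (simp_all add: \<tau>[unfolded \<tau>_def])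
  have "\<tau> * (q ^ c - 1) \<le> (1 / (q ^ A - 1)) * (q ^ A - 1)"
    using \<open>1 \<le> q ^ c\<close> \<open>q ^ c \<le> q ^ A\<close> \<open>1 < q ^ A\<close> r by (intro mult_mono) (auto simp: \<tau>)
  then have ratio: "\<tau> * (q ^ c - 1) \<le> 1"
    using \<open>1 < q ^ A\<close> by simp
  have "\<tau> * (1 - 2 * r) \<le> r * (1 - r) ^ (A - 1) / (1 - 2 * r) * (1 - 2 * r)"
    using r by (intro mult_right_mono) (auto simp: \<tau>)
  moreover have "(1 - r) ^ (A - 1) \<le> (1 - r) ^ (c - 1)"
    using r assms(3) by (intro power_decreasing) auto
  then have "r * (1 - r) ^ (A - 1) \<le> r * (1 - r) ^ (c - 1)"
    by (rule mult_left_mono) (use r in simp)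
  moreover have "r * (1 - r) ^ (A - 1) / (1 - 2 * r) * (1 - 2 * r) = r * (1 - r) ^ (A - 1)"
    using r by simp
  ultimately have middle: "\<tau> * (1 - 2 * r) \<le> r * (1 - r) ^ (c - 1)"
    by linarith
  have "0 \<le> \<tau>"
    using r \<open>1 < q ^ A\<close> by (simp add: \<tau>)
  with ratio middle show "thick ((\<lambda>x. x ^ c) ` cantor \<alpha>) (cantor_power_thickness \<alpha> A)"
    using thick_power_cantor[OF assms(1,2)] by (simp add: \<tau>_def q_def r_def)
qed

lemma thickness_bound_ratio:
  fixes r m :: real
  assumes r: "0 < r" "r < 1/2" and "1 \<le> A" and m: "((1 - r) / r) ^ (A + 1) \<le> m"
  shows "1 < (m - 1) * (1 / (((1 - r) / r) ^ A - 1))"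
proof -
  define q where "q = (1 - r) / r"
  have "1 < q"
    using r by (simp add: q_def field_simps)
  then have "1 < q ^ A" "q ^ A < q ^ (A + 1)"
    using \<open>1 \<le> A\<close> by (auto intro: one_less_power power_strict_increasing)
  then show ?thesis
    using m by (simp add: q_def field_simps)
qed

lemma thickness_bound_middle_large_ratio:
  fixes r m :: real
  assumes r: "1/3 \<le> r" "r < 1/2" and "1 \<le> A" "2 * A \<le> s" and m: "(1 / (1 - r)) ^ (s - 1) + 1 \<le> m"
  shows "1 - 2 * r < (m - 1) * (r * (1 - r) ^ (A - 1))"
proof -
  define p where "p = 1 - r"
  have p: "0 < p" "1 < 1 / p"
    using r by (simp_all add: p_def)
  have "(1 / p) ^ (2 * A - 1) \<le> (1 / p) ^ (s - 1)"
    using p assms(4) by (intro power_increasing) auto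
  then have "(1 / p) ^ (2 * A - 1) \<le> m - 1"
    using m unfolding p_def by linarith
  then have "(1 / p) ^ (2 * A - 1) * (r * p ^ (A - 1)) \<le> (m - 1) * (r * p ^ (A - 1))"
    using p r by (intro mult_right_mono) auto
  moreover have "(1 / p) ^ (2 * A - 1) * (r * p ^ (A - 1)) = r * (1 / p) ^ A"
  proof -
    have "2 * A - 1 = A + (A - 1)"
      using \<open>1 \<le> A\<close> by simp
    then have "(1 / p) ^ (2 * A - 1) = (1 / p) ^ A * (1 / p) ^ (A - 1)"
      by (simp only: power_add)
    then show ?thesis
      using p by (simp add: field_simps)
  qed
  moreover have "r * 1 < r * (1 / p) ^ A"
    using p r \<open>1 \<le> A\<close> by (intro mult_strict_left_mono one_less_power) auto
  ultimately have "1 - 2 * r < (m - 1) * (r * p ^ (A - 1))"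
    using r by linarith
  then show ?thesis
    by (simp add: p_def)
qed

lemma thickness_bound_middle_small_ratio:
  fixes r m :: real
  assumes r: "0 < r" "r < 1/3" and "1 \<le> A" and m: "((1 - r) / r) ^ (A + 1) \<le> m"
  shows "1 - 2 * r < (m - 1) * (r * (1 - r) ^ (A - 1))"
proof -
  define p where "p = 1 - r"
  define q where "q = p / r"
  have p: "0 < p" "p \<le> 1"
    using r by (simp_all add: p_def)
  have "q ^ (A + 1) * (r * p ^ (A - 1)) = (q * p) ^ A"
  proof -
    have "q ^ (A + 1) * (r * p ^ (A - 1)) = q ^ A * (q * r) * p ^ (A - 1)"
      by (simp add: algebra_simps)
    also have "\<dots> = q ^ A * p ^ A"
      using r \<open>1 \<le> A\<close> by (simp add: q_def power_eq_if)
    finally show ?thesis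
      by (simp add: power_mult_distrib)
  qed
  moreover have "(q ^ (A + 1) - 1) * (r * p ^ (A - 1)) \<le> (m - 1) * (r * p ^ (A - 1))"
    using m p r by (intro mult_right_mono) (auto simp: p_def q_def)
  moreover have "1 < q * p"
  proof -
    have "r < p * p"
      using r by (simp add: p_def algebra_simps) (smt (verit) mult_nonneg_nonneg)
    then show ?thesis
      using r by (simp add: q_def field_simps)
  qed
  then have "1 < (q * p) ^ A"
    using \<open>1 \<le> A\<close> by (intro one_less_power) auto
  moreover have "r * p ^ (A - 1) \<le> r"
    using p r mult_left_mono[OF power_le_one[of p "A - 1"], of r] by simp
  moreover have "(q ^ (A + 1) - 1) * (r * p ^ (A - 1)) = q ^ (A + 1) * (r * p ^ (A - 1)) - r * p ^ (A - 1)"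
    by (simp add: left_diff_distrib)
  ultimately have "1 - 2 * r < (m - 1) * (r * p ^ (A - 1))"
    using r by linarith
  then show ?thesis
    by (simp add: p_def)
qed

lemma one_less_mult_cantor_power_thickness:
  fixes m :: real
  assumes "\<alpha> > 1" "1 \<le> A" "2 * A \<le> s"
    and m: "((1 - cratio \<alpha>) / cratio \<alpha>) ^ (A + 1) \<le> m" "(1 / (1 - cratio \<alpha>)) ^ (s - 1) + 1 \<le> m"
  shows "1 < (m - 1) * cantor_power_thickness \<alpha> A"
proof -
  define r where "r = cratio \<alpha>"
  have r: "0 < r" "r < 1/2"
    using cratio_bounds[OF assms(1)] by (auto simp: r_def)
  have "1 < (1 / (1 - r)) ^ (s - 1)"
    using r assms(2,3) by (intro one_less_power) auto
  then have "1 < m - 1"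
    using m(2) by (simp add: r_def)
  moreover have "1 < (m - 1) * (1 / (((1 - r) / r) ^ A - 1))"
    using thickness_bound_ratio[OF r assms(2)] m(1) by (simp add: r_def)
  moreover have "1 - 2 * r < (m - 1) * (r * (1 - r) ^ (A - 1))"
    using thickness_bound_middle_large_ratio[OF _ r(2) assms(2,3)]
      thickness_bound_middle_small_ratio[OF r(1) _ assms(2)] m by (cases "r < 1/3") (auto simp: r_def)
  then have "1 < (m - 1) * (r * (1 - r) ^ (A - 1) / (1 - 2 * r))"
    using r by (simp add: field_simps)
  ultimately show ?thesis
    by (simp add: cantor_power_thickness_def min_mult_distrib_left flip: r_def)
qed

lemma power_image_cantor:
  assumes "\<alpha> > 1" "1 \<le> c"
  shows "compact ((\<lambda>x. x ^ c) ` cantor \<alpha>)" "(\<lambda>x. x ^ c) ` cantor \<alpha> \<subseteq> {0..1}"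
    and "0 \<in> (\<lambda>x. x ^ c) ` cantor \<alpha>" "1 \<in> (\<lambda>x. x ^ c) ` cantor \<alpha>"
proof -
  show "compact ((\<lambda>x. x ^ c) ` cantor \<alpha>)"
    by (intro compact_continuous_image compact_cantor[OF assms(1)] continuous_intros)
  show "(\<lambda>x. x ^ c) ` cantor \<alpha> \<subseteq> {0..1}"
  proof
    fix y
    assume "y \<in> (\<lambda>x. x ^ c) ` cantor \<alpha>"
    then obtain x where "x \<in> {0..1}" "y = x ^ c"
      using cantor_subset_unit[OF assms(1)] by blast
    then show "y \<in> {0..1}"
      by (simp add: power_le_one)
  qed
  show "0 \<in> (\<lambda>x. x ^ c) ` cantor \<alpha>"
    using zero_mem_cantor[OF assms(1)] assms(2) by (intro image_eqI[of 0 _ 0]) auto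
  show "1 \<in> (\<lambda>x. x ^ c) ` cantor \<alpha>"
    using one_mem_cantor[OF assms(1)] by (intro image_eqI[of 1 _ 1]) auto
qed

lemma sum_pair_products_bounds:
  fixes S :: "real set" and a :: "nat \<Rightarrow> nat"
  assumes "S \<subseteq> {0..1}"
  shows "{\<Sum>i\<in>{1..m}. x (2*i - 1) ^ a (2*i - 1) * x (2*i) ^ a (2*i) | x. \<forall>j\<in>{1..2*m}. x j \<in> S}
    \<subseteq> {0..real m}"
proof
  fix t
  assume "t \<in> {\<Sum>i\<in>{1..m}. x (2*i - 1) ^ a (2*i - 1) * x (2*i) ^ a (2*i) | x. \<forall>j\<in>{1..2*m}. x j \<in> S}"
  then obtain x where t: "t = (\<Sum>i\<in>{1..m}. x (2*i - 1) ^ a (2*i - 1) * x (2*i) ^ a (2*i))"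
    and x: "\<forall>j\<in>{1..2*m}. x j \<in> S"
    by blast
  have term_bounds: "0 \<le> x (2*i - 1) ^ a (2*i - 1) * x (2*i) ^ a (2*i)"
    "x (2*i - 1) ^ a (2*i - 1) * x (2*i) ^ a (2*i) \<le> 1" if "i \<in> {1..m}" for i
  proof -
    have "2*i - 1 \<in> {1..2*m}" "2*i \<in> {1..2*m}"
      using that by auto
    then have "x (2*i - 1) \<in> {0..1}" "x (2*i) \<in> {0..1}"
      using x assms by blast+
    then show "0 \<le> x (2*i - 1) ^ a (2*i - 1) * x (2*i) ^ a (2*i)"
      "x (2*i - 1) ^ a (2*i - 1) * x (2*i) ^ a (2*i) \<le> 1"
      by (auto intro: mult_le_one power_le_one)
  qed
  have "0 \<le> t"
    unfolding t by (intro sum_nonneg) (use term_bounds in auto)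
  moreover have "t \<le> (\<Sum>i\<in>{1..m}. 1)"
    unfolding t by (intro sum_mono) (use term_bounds in auto)
  ultimately show "t \<in> {0..real m}"
    by simp
qed

lemma sum_min_powers_subset_sum_pair_products:
  fixes S :: "real set" and a :: "nat \<Rightarrow> nat"
  assumes "1 \<in> S"
  shows "{sum z {1..m} | z. \<forall>i\<in>{1..m}. z i \<in> (\<lambda>x. x ^ min (a (2*i - 1)) (a (2*i))) ` S}
    \<subseteq> {\<Sum>i\<in>{1..m}. x (2*i - 1) ^ a (2*i - 1) * x (2*i) ^ a (2*i) | x. \<forall>j\<in>{1..2*m}. x j \<in> S}"
proof
  fix t
  assume "t \<in> {sum z {1..m} | z. \<forall>i\<in>{1..m}. z i \<in> (\<lambda>x. x ^ min (a (2*i - 1)) (a (2*i))) ` S}"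
  then obtain z where t: "t = sum z {1..m}"
    and "\<forall>i\<in>{1..m}. \<exists>w\<in>S. z i = w ^ min (a (2*i - 1)) (a (2*i))"
    by blast
  then obtain w where w: "\<forall>i\<in>{1..m}. w i \<in> S \<and> z i = w i ^ min (a (2*i - 1)) (a (2*i))"
    by metis
  \<comment> \<open>\<open>x\<close> puts \<open>w i\<close> at the smaller exponent of the \<open>i\<close>-th pair and \<open>1\<close> at the other one.\<close>
  define x where "x j = (if odd j \<and> a j \<le> a (j + 1) \<or> even j \<and> \<not> a (j - 1) \<le> a j
    then w ((j + 1) div 2) else 1)" for j
  have "x (2*i - 1) ^ a (2*i - 1) * x (2*i) ^ a (2*i) = z i" if "i \<in> {1..m}" for i
  proof -
    have "odd (2*i - 1)" "2*i - 1 + 1 = 2*i" "2*i - 1 = 2*i - 1" "(2*i - 1 + 1) div 2 = i" "(2*i + 1) div 2 = i"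
      using that by presburger+
    then show ?thesis
      using w that by (cases "a (2*i - 1) \<le> a (2*i)") (simp_all add: x_def min_def)
  qed
  then have "t = (\<Sum>i\<in>{1..m}. x (2*i - 1) ^ a (2*i - 1) * x (2*i) ^ a (2*i))"
    unfolding t by (intro sum.cong) auto
  moreover have "x j \<in> S" if "j \<in> {1..2*m}" for j
  proof -
    have "(j + 1) div 2 \<in> {1..m}"
      using that by auto
    then show ?thesis
      using w assms by (simp add: x_def)
  qed
  ultimately show "t \<in> {\<Sum>i\<in>{1..m}. x (2*i - 1) ^ a (2*i - 1) * x (2*i) ^ a (2*i) | x. \<forall>j\<in>{1..2*m}. x j \<in> S}"
    by blast
qed

theorem interval_subset_sumset_power_cantor:
  assumes "\<alpha> > 1" "finite I" "1 \<le> A" "2 * A \<le> s"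
    and c: "\<And>i. i \<in> I \<Longrightarrow> 1 \<le> c i \<and> c i \<le> A"
    and m: "((1 - cratio \<alpha>) / cratio \<alpha>) ^ (A + 1) \<le> real (card I)"
      "(1 / (1 - cratio \<alpha>)) ^ (s - 1) + 1 \<le> real (card I)"
  shows "{0..real (card I)} \<subseteq> {sum z I | z. \<forall>i\<in>I. z i \<in> (\<lambda>x. x ^ c i) ` cantor \<alpha>}"
proof -
  define K where "K i = (\<lambda>x. x ^ c i) ` cantor \<alpha>" for i
  define \<tau> where "\<tau> = cantor_power_thickness \<alpha> A"
  have "1 < (real (card I) - 1) * \<tau>"
    using one_less_mult_cantor_power_thickness[OF assms(1,3,4) m] by (simp add: \<tau>_def)
  moreover have "0 < \<tau>" "\<tau> \<le> 1"
    using cantor_power_thickness(1,2)[OF assms(1,3) order_refl] by (simp_all add: \<tau>_def)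
  moreover have K: "compact (K i)" "K i \<subseteq> {0..1}" "0 \<in> K i" "1 \<in> K i" "thick (K i) \<tau>"
    if "i \<in> I" for i
    using power_image_cantor[OF assms(1)] cantor_power_thickness(3)[OF assms(1)] c[OF that]
    by (simp_all add: K_def \<tau>_def)
  ultimately show ?thesis
    using thick_sumset_contains_interval[where I = I and K = K and \<tau> = \<tau>, OF assms(2) K]
    by (simp add: K_def)
qed

lemma abar_bounds:
  assumes "2 \<le> s"
  shows "1 \<le> abar s" "2 * abar s \<le> s"
  using assms by (auto simp: abar_def elim!: oddE)

lemma min_le_abar: "min p q \<le> abar (p + q)"
  by (auto simp: abar_def) presburger+

theorem mainTheorem4:
  fixes \<alpha> :: real and s k :: nat and a :: "nat \<Rightarrow> nat"
  assumes "\<alpha> > 1" and "s \<ge> 2"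
    and "k > 0" and "even k"
    and "\<forall>i\<in>{1..k}. a i > 0"
    and "\<forall>i\<in>{1..k div 2}. a (2*i - 1) + a (2*i) = s"
    and "let r = cratio \<alpha>; A = abar s; B = bbar s; N = nat (nstar \<alpha> s) in
         real k \<ge> Max {
           real_of_int \<lceil>2 * ((1 - r + r ^ N) ^ (A - 1) * (B * (1 - r + r ^ N) + A))
              / ((1 - r) ^ (A - 1) * (1 - r ^ N) ^ (B - 1) * (B * (1 - r) + A * (1 - r ^ N))) + 2\<rceil>
             * ((1 - r) / r) ^ A,
           2 * ((1 - r) / r) ^ (A + 1),
           2 * (1 / (1 - r)) ^ (s - 1) + 2}"
  shows "{0 .. real k / 2} =
    {\<Sum>i\<in>{1..k div 2}. x (2*i - 1) ^ a (2*i - 1) * x (2*i) ^ a (2*i) | x :: nat \<Rightarrow> real.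
       \<forall>j\<in>{1..k}. x j \<in> cantor \<alpha>}"
proof -
  obtain m where k: "k = 2 * m"
    using \<open>even k\<close> by blast
  have "1 \<le> min (a (2*i - 1)) (a (2*i)) \<and> min (a (2*i - 1)) (a (2*i)) \<le> abar s" if "i \<in> {1..m}" for i
  proof -
    have "2*i - 1 \<in> {1..k}" "2*i \<in> {1..k}" "i \<in> {1..k div 2}"
      using that k by auto
    then have "0 < a (2*i - 1)" "0 < a (2*i)" "a (2*i - 1) + a (2*i) = s"
      using assms(5,6) by blast+
    then show ?thesis
      using min_le_abar[of "a (2*i - 1)" "a (2*i)"] by simp
  qed
  \<comment> \<open>Only the last two terms of the maximum are needed.\<close>
  moreover have "((1 - cratio \<alpha>) / cratio \<alpha>) ^ (abar s + 1) \<le> real m"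
    "(1 / (1 - cratio \<alpha>)) ^ (s - 1) + 1 \<le> real m"
    using assms(7) by (simp_all add: Let_def k)
  ultimately have "{0..real m} \<subseteq>
      {sum z {1..m} | z. \<forall>i\<in>{1..m}. z i \<in> (\<lambda>x. x ^ min (a (2*i - 1)) (a (2*i))) ` cantor \<alpha>}"
    using interval_subset_sumset_power_cantor[OF \<open>\<alpha> > 1\<close> _ abar_bounds[OF \<open>s \<ge> 2\<close>],
        where I = "{1..m}" and c = "\<lambda>i. min (a (2*i - 1)) (a (2*i))"]
    by simp
  also have "\<dots> \<subseteq> {\<Sum>i\<in>{1..m}. x (2*i - 1) ^ a (2*i - 1) * x (2*i) ^ a (2*i) | x. \<forall>j\<in>{1..2*m}. x j \<in> cantor \<alpha>}"
    using one_mem_cantor[OF \<open>\<alpha> > 1\<close>] by (rule sum_min_powers_subset_sum_pair_products)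
  finally show ?thesis
    using sum_pair_products_bounds[OF cantor_subset_unit[OF \<open>\<alpha> > 1\<close>], where m = m and a = a]
    by (auto simp: k)
qed

end
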